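(* Let $H$ be a strictly balanced graph, $c>0$, $h_0>0$, with $\mu:=c^{v(H)}/|\mathrm{Aut}(H)|\ge h_0$. Let $m_n\to\infty$ and, for each $n$, let $\mathcal{G}_{n,1},\dots,\mathcal{G}_{n,n}$ be i.i.d. $G\big(m_n,(c/m_n)^{1/k(H)}\big)$ graphs, with $h_{n,i}=\mathcal{T}(H,\mathcal{G}_{n,i})-h_0$. Let $\hat\lambda_n$ be the unique real root of $\sum_{i=1}^n h_{n,i}e^{-\lambda h_{n,i}}=0$ (defined on an event of probability tending to one). Then $\hat\lambda_n\xrightarrow{P}\lambda^{\circ}:=\log(\mu/h_0)$.
   Context: $v(H),e(H)$ are the numbers of vertices and edges of $H$; $k(H)=\max\{e(F)/v(F): F\subseteq H,\ e(F)\ge1\}$; $H$ is strictly balanced if $e(H)/v(H)>e(F)/v(F)$ for every proper subgraph $F$ with at least one edge. $\mathcal{T}(H,G)=\mathrm{inj}(H,G)/|\mathrm{Aut}(H)|$ is the number of unlabelled copies of $H$ in $G$ ($\mathrm{inj}$ counts injective edge-preserving maps, $\mathrm{Aut}(H)$ the automorphism group). $G(m,p)$ is the Erdős–Rényi random graph. *)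

theory Defs
  imports "HOL-Probability.Probability"
begin

definition is_graph :: "nat \<Rightarrow> nat set set \<Rightarrow> bool" where
  "is_graph v E \<longleftrightarrow> (\<forall>e\<in>E. \<exists>a b. a \<noteq> b \<and> a < v \<and> b < v \<and> e = {a, b})"

definition all_edges :: "nat \<Rightarrow> nat set set" where
  "all_edges m = {{a, b} | a b. a \<noteq> b \<and> a < m \<and> b < m}"

definition subgraphs :: "nat \<Rightarrow> nat set set \<Rightarrow> (nat set \<times> nat set set) set" where
  "subgraphs v EH = {(V, E). V \<subseteq> {0..<v} \<and> E \<subseteq> EH \<and> (\<forall>e\<in>E. e \<subseteq> V)}"

definition strictly_balanced :: "nat \<Rightarrow> nat set set \<Rightarrow> bool" where
  "strictly_balanced v EH \<longleftrightarrow>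
     (\<forall>(V, E) \<in> subgraphs v EH. E \<noteq> {} \<and> (V, E) \<noteq> ({0..<v}, EH) \<longrightarrow>
        real (card E) / real (card V) < real (card EH) / real v)"

definition max_density :: "nat \<Rightarrow> nat set set \<Rightarrow> real" where
  "max_density v EH = Max {real (card E) / real (card V) | V E. (V, E) \<in> subgraphs v EH \<and> E \<noteq> {}}"

definition Aut :: "nat \<Rightarrow> nat set set \<Rightarrow> (nat \<Rightarrow> nat) set" where
  "Aut v EH = {\<sigma> \<in> {0..<v} \<rightarrow>\<^sub>E {0..<v}. bij_betw \<sigma> {0..<v} {0..<v} \<and> (\<lambda>e. \<sigma> ` e) ` EH = EH}"

definition inj_hom :: "nat \<Rightarrow> nat set set \<Rightarrow> nat \<Rightarrow> nat set set \<Rightarrow> (nat \<Rightarrow> nat) set" where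
  "inj_hom v EH m G = {f \<in> {0..<v} \<rightarrow>\<^sub>E {0..<m}. inj_on f {0..<v} \<and> (\<forall>e\<in>EH. f ` e \<in> G)}"

text \<open>T(H,G) = inj(H,G) / |Aut(H)|, number of unlabelled copies of H in G.\<close>
definition copies :: "nat \<Rightarrow> nat set set \<Rightarrow> nat \<Rightarrow> nat set set \<Rightarrow> real" where
  "copies v EH m G = real (card (inj_hom v EH m G)) / real (card (Aut v EH))"

definition gnp :: "nat \<Rightarrow> real \<Rightarrow> nat set set pmf" where
  "gnp m p = map_pmf (\<lambda>f. {e \<in> all_edges m. f e})
               (Pi_pmf (all_edges m) False (\<lambda>_. bernoulli_pmf p))"

end

(*
  The number X of copies of H in G(m, (c/m)^(1/k(H))) converges in distribution to Poisson(mu),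
  mu = c^v(H) / |Aut(H)|, by the method of binomial moments: E (X choose j) is a sum over
  j-tuples of distinct copies; the vertex-disjoint tuples contribute mu^j / j! in the limit, and
  strict balance makes all other tuples negligible, because a copy sharing a proper subgraph
  (W, D) of H with the others costs a factor m^(v |D| / e - |W|), which tends to 0.

  The estimating function F(l) = sum_i h_i exp (- l h_i) is strictly decreasing in l. For fixed l,
  Hoeffding's inequality makes F(l) / n close to the Poisson mean of (X - h0) exp (- l (X - h0)),
  which is a positive multiple of mu exp (- l) - h0. So with high probability F changes sign
  between ln (mu / h0) - eps and ln (mu / h0) + eps, and its unique root lies in between.
*)

theory Submission
  imports Defs "HOL-Real_Asymp.Real_Asymp"
begin

section \<open>The estimating equation\<close>

definition score :: "real \<Rightarrow> real \<Rightarrow> real \<Rightarrow> real" where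
  "score h0 l x = (x - h0) * exp (- l * (x - h0))"

lemma score_antimono:
  assumes "l \<le> l'"
  shows "score h0 l' x \<le> score h0 l x"
proof (cases "x \<ge> h0")
  case True
  then have "exp (- l' * (x - h0)) \<le> exp (- l * (x - h0))"
    using assms by (simp add: mult_right_mono)
  then show ?thesis
    using True unfolding score_def by (simp add: mult_left_mono)
next
  case False
  then have "exp (- l * (x - h0)) \<le> exp (- l' * (x - h0))"
    using assms by (simp add: mult_right_mono_neg)
  then show ?thesis
    using False unfolding score_def by (simp add: mult_left_mono_neg)
qed

lemma score_strict_antimono:
  assumes "l < l'" and "x \<noteq> h0"
  shows "score h0 l' x < score h0 l x"
proof (cases "x > h0")
  case True
  then have "exp (- l' * (x - h0)) < exp (- l * (x - h0))"
    using assms by simp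
  then show ?thesis
    using True unfolding score_def by simp
next
  case False
  then have "x < h0"
    using assms by simp
  moreover have "exp (- l * (x - h0)) < exp (- l' * (x - h0))"
    using assms \<open>x < h0\<close> by (simp add: mult_strict_right_mono_neg)
  ultimately show ?thesis
    unfolding score_def by simp
qed

lemma sum_score_strict_antimono:
  assumes "finite I" and "i \<in> I" and "x i \<noteq> h0" and "l < l'"
  shows "(\<Sum>i\<in>I. score h0 l' (x i)) < (\<Sum>i\<in>I. score h0 l (x i))"
proof (rule sum_strict_mono_ex1)
  show "\<forall>i\<in>I. score h0 l' (x i) \<le> score h0 l (x i)"
    using \<open>l < l'\<close> by (simp add: score_antimono)
  show "\<exists>i\<in>I. score h0 l' (x i) < score h0 l (x i)"
    using assms score_strict_antimono[of l l' "x i" h0] by blast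
qed fact

lemma sum_score_unique_root:
  fixes x :: "'i \<Rightarrow> real" and I :: "'i set" and h0 :: real
  defines "F \<equiv> \<lambda>l. \<Sum>i\<in>I. score h0 l (x i)"
  assumes "finite I" and "l1 < l2" and pos: "F l1 > 0" and neg: "F l2 < 0"
  shows "(\<exists>!l. F l = 0) \<and> l1 < (THE l. F l = 0) \<and> (THE l. F l = 0) < l2"
proof -
  have "\<exists>i\<in>I. x i \<noteq> h0"
  proof (rule ccontr)
    assume "\<not> ?thesis"
    then have "F l1 = 0"
      unfolding F_def score_def by (intro sum.neutral) simp
    with pos show False by simp
  qed
  then obtain i where i: "i \<in> I" "x i \<noteq> h0"
    by blast
  have decreasing: "F b < F a" if "a < b" for a b
    unfolding F_def by (rule sum_score_strict_antimono[where x = x, OF \<open>finite I\<close> i that])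
  have "continuous_on {l1..l2} F"
    unfolding F_def score_def by (intro continuous_intros)
  then obtain l where l: "l1 \<le> l" "l \<le> l2" "F l = 0"
    using IVT2'[of F l2 0 l1] pos neg \<open>l1 < l2\<close> by force
  have unique: "y = l" if "F y = 0" for y
    using decreasing[of y l] decreasing[of l y] that l(3) by (cases y l rule: linorder_cases) simp_all
  have "\<exists>!l. F l = 0"
    using l(3) unique by blast
  moreover have "(THE l. F l = 0) = l"
    using l(3) unique by (rule the_equality)
  moreover have "l \<noteq> l1" "l \<noteq> l2"
    using l(3) pos neg by auto
  ultimately show ?thesis
    using l(1,2) by simp
qed

section \<open>Events with high probability\<close>

definition whp :: "(nat \<Rightarrow> 'a pmf) \<Rightarrow> (nat \<Rightarrow> 'a \<Rightarrow> bool) \<Rightarrow> bool" where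
  "whp M P \<longleftrightarrow> (\<lambda>n. measure_pmf.prob (M n) {x. P n x}) \<longlonglongrightarrow> 1"

lemma whp_mono:
  assumes "whp M P" and "\<And>n x. P n x \<Longrightarrow> Q n x"
  shows "whp M Q"
  unfolding whp_def
proof (rule tendsto_sandwich[OF _ _ assms(1)[unfolded whp_def] tendsto_const])
  show "\<forall>\<^sub>F n in sequentially. measure_pmf.prob (M n) {x. P n x} \<le> measure_pmf.prob (M n) {x. Q n x}"
    using assms(2) by (intro always_eventually allI measure_pmf.finite_measure_mono) auto
qed (simp add: measure_pmf.prob_le_1)

lemma measure_pmf_Int_ge:
  "measure_pmf.prob M A + measure_pmf.prob M B - 1 \<le> measure_pmf.prob M (A \<inter> B)"
proof -
  have "measure_pmf.prob M (A \<union> B) = measure_pmf.prob M A + measure_pmf.prob M B - measure_pmf.prob M (A \<inter> B)"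
    by (rule measure_Un3) (simp_all add: fmeasurable_def measure_pmf.emeasure_eq_measure)
  then show ?thesis
    using measure_pmf.prob_le_1[of M "A \<union> B"] by linarith
qed

lemma whp_conj:
  assumes "whp M P" and "whp M Q"
  shows "whp M (\<lambda>n x. P n x \<and> Q n x)"
  unfolding whp_def
proof (rule tendsto_sandwich[OF _ _ _ tendsto_const])
  show "(\<lambda>n. measure_pmf.prob (M n) {x. P n x} + measure_pmf.prob (M n) {x. Q n x} - 1) \<longlonglongrightarrow> 1"
    using tendsto_diff[OF tendsto_add[OF assms[unfolded whp_def]] tendsto_const[of 1]] by simp
  show "\<forall>\<^sub>F n in sequentially. measure_pmf.prob (M n) {x. P n x} + measure_pmf.prob (M n) {x. Q n x} - 1
          \<le> measure_pmf.prob (M n) {x. P n x \<and> Q n x}"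
    unfolding Collect_conj_eq by (intro always_eventually allI measure_pmf_Int_ge)
qed (simp add: measure_pmf.prob_le_1)

lemma Pi_pmf_Hoeffding:
  fixes Q :: "'a pmf" and \<phi> :: "'a \<Rightarrow> real" and n :: nat
  assumes "n > 0" and bounded: "\<And>x. a \<le> \<phi> x \<and> \<phi> x \<le> b" and "a < b" and "\<epsilon> \<ge> 0"
  shows "measure_pmf.prob (Pi_pmf {..<n} d (\<lambda>_. Q))
           {\<omega>. (\<Sum>i<n. \<phi> (\<omega> i)) / real n \<ge> measure_pmf.expectation Q \<phi> + \<epsilon>}
         \<le> exp (- 2 * real n * \<epsilon>\<^sup>2 / (b - a)\<^sup>2)"
proof -
  define M where "M = Pi_pmf {..<n} d (\<lambda>_. Q)"
  have marginal: "map_pmf (\<lambda>\<omega>. \<omega> i) M = Q" if "i < n" for i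
    unfolding M_def using that by (subst Pi_pmf_component) simp_all
  interpret iid: Hoeffding_ineq_iid "measure_pmf M" "{..<n}" "\<lambda>i \<omega>. \<phi> (\<omega> i)" "\<lambda>\<omega>. \<phi> (\<omega> 0)" a b
      "measure_pmf.expectation Q \<phi>"
  proof unfold_locales
    show "prob_space.indep_vars (measure_pmf M) (\<lambda>_. borel) (\<lambda>i \<omega>. \<phi> (\<omega> i)) {..<n}"
      unfolding M_def
      by (intro prob_space.indep_vars_compose2[OF _ indep_vars_Pi_pmf])
         (auto simp: measure_pmf.prob_space_axioms)
    show "distr (measure_pmf M) borel (\<lambda>\<omega>. \<phi> (\<omega> i)) = distr (measure_pmf M) borel (\<lambda>\<omega>. \<phi> (\<omega> 0))"
      if "i \<in> {..<n}" for i
    proof -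
      have "distr (measure_pmf M) borel (\<lambda>\<omega>. \<phi> (\<omega> j)) = distr (measure_pmf Q) borel \<phi>" if "j < n" for j
        unfolding marginal[OF that, symmetric] map_pmf_rep_eq by (subst distr_distr) (auto simp: o_def)
      then show ?thesis
        using that \<open>n > 0\<close> by simp
    qed
    have "measure_pmf.expectation M (\<lambda>\<omega>. \<phi> (\<omega> 0)) = measure_pmf.expectation (map_pmf (\<lambda>\<omega>. \<omega> 0) M) \<phi>"
      by simp
    then show "measure_pmf.expectation Q \<phi> \<equiv> measure_pmf.expectation M (\<lambda>\<omega>. \<phi> (\<omega> 0))"
      using marginal[OF \<open>n > 0\<close>] by simp
  qed (use bounded \<open>a < b\<close> in auto)
  show ?thesis
    using iid.Hoeffding_ineq_ge'[OF \<open>\<epsilon> \<ge> 0\<close> \<open>a < b\<close>] \<open>n > 0\<close> by (simp add: M_def lessThan_empty_iff)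
qed

lemma Pi_pmf_sum_nonneg_prob_le:
  fixes Q :: "'a pmf" and \<phi> :: "'a \<Rightarrow> real" and n :: nat
  assumes "n > 0" and bounded: "\<And>x. a \<le> \<phi> x \<and> \<phi> x \<le> b" and "a < b"
    and "\<eta> \<ge> 0" and mean: "measure_pmf.expectation Q \<phi> \<le> - \<eta>"
  shows "measure_pmf.prob (Pi_pmf {..<n} d (\<lambda>_. Q)) {\<omega>. (\<Sum>i<n. \<phi> (\<omega> i)) \<ge> 0}
         \<le> exp (- 2 * real n * \<eta>\<^sup>2 / (b - a)\<^sup>2)"
proof -
  have "{\<omega>. (\<Sum>i<n. \<phi> (\<omega> i)) \<ge> 0} \<subseteq> {\<omega>. (\<Sum>i<n. \<phi> (\<omega> i)) / real n \<ge> measure_pmf.expectation Q \<phi> + \<eta>}"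
    using mean by (auto intro: order_trans[OF _ divide_nonneg_nonneg])
  then have "measure_pmf.prob (Pi_pmf {..<n} d (\<lambda>_. Q)) {\<omega>. (\<Sum>i<n. \<phi> (\<omega> i)) \<ge> 0} \<le>
      measure_pmf.prob (Pi_pmf {..<n} d (\<lambda>_. Q))
        {\<omega>. (\<Sum>i<n. \<phi> (\<omega> i)) / real n \<ge> measure_pmf.expectation Q \<phi> + \<eta>}"
    by (rule measure_pmf.finite_measure_mono) simp
  also have "\<dots> \<le> exp (- 2 * real n * \<eta>\<^sup>2 / (b - a)\<^sup>2)"
    using assms by (intro Pi_pmf_Hoeffding)
  finally show ?thesis .
qed

lemma whp_sum_neg:
  fixes Q :: "nat \<Rightarrow> 'a pmf" and \<phi> :: "nat \<Rightarrow> 'a \<Rightarrow> real"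
  assumes bounded: "\<And>n x. a \<le> \<phi> n x \<and> \<phi> n x \<le> b"
    and lim: "(\<lambda>n. measure_pmf.expectation (Q n) (\<phi> n)) \<longlonglongrightarrow> L" and "L < 0"
  shows "whp (\<lambda>n. Pi_pmf {..<n} d (\<lambda>_. Q n)) (\<lambda>n \<omega>. (\<Sum>i<n. \<phi> n (\<omega> i)) < 0)"
proof -
  define M where "M = (\<lambda>n. Pi_pmf {..<n} d (\<lambda>_. Q n))"
  define S where "S = (\<lambda>n \<omega>. (\<Sum>i<n. \<phi> n (\<omega> i)))"
  define \<eta> where "\<eta> = - L / 2"
  define K where "K = 2 * \<eta>\<^sup>2 / (b + 1 - a)\<^sup>2"
  have "a \<le> b"
    using bounded[of 0 undefined] by linarith
  have "\<eta> > 0"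
    using \<open>L < 0\<close> by (simp add: \<eta>_def)
  then have "K > 0"
    using \<open>a \<le> b\<close> by (simp add: K_def)
  have "\<forall>\<^sub>F n in sequentially. measure_pmf.expectation (Q n) (\<phi> n) < - \<eta>"
    using order_tendstoD(2)[OF lim, of "- \<eta>"] \<open>L < 0\<close> by (simp add: \<eta>_def)
  then have lower: "\<forall>\<^sub>F n in sequentially. 1 - exp (- K * real n) \<le> measure_pmf.prob (M n) {\<omega>. S n \<omega> < 0}"
    using eventually_gt_at_top[of 0]
  proof eventually_elim
    case (elim n)
    have "measure_pmf.prob (M n) {\<omega>. S n \<omega> \<ge> 0} \<le> exp (- 2 * real n * \<eta>\<^sup>2 / (b + 1 - a)\<^sup>2)"
      unfolding M_def S_def
    proof (rule Pi_pmf_sum_nonneg_prob_le)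
      show "a \<le> \<phi> n x \<and> \<phi> n x \<le> b + 1" for x
        using bounded[of n x] by linarith
    qed (use elim \<open>a \<le> b\<close> \<open>\<eta> > 0\<close> in simp_all)
    also have "\<dots> = exp (- K * real n)"
      by (simp add: K_def)
    moreover have "{\<omega>. S n \<omega> < 0} = UNIV - {\<omega>. S n \<omega> \<ge> 0}"
      by auto
    ultimately show ?case
      using measure_pmf.prob_compl[of "{\<omega>. S n \<omega> \<ge> 0}" "M n"] by simp
  qed
  have "(\<lambda>n. 1 - exp (- K * real n)) \<longlonglongrightarrow> 1"
    using \<open>K > 0\<close> by real_asymp
  from tendsto_sandwich[OF lower _ this tendsto_const]
  show ?thesis
    unfolding whp_def M_def S_def by (simp add: measure_pmf.prob_le_1)
qed

section \<open>Poisson limits\<close>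

lemma poisson_pmf_sums:
  assumes "\<mu> > 0"
  shows "(\<lambda>k. pmf (poisson_pmf \<mu>) k) sums 1"
proof -
  have "(\<lambda>k. \<mu> ^ k / fact k * exp (- \<mu>)) sums (exp \<mu> * exp (- \<mu>))"
    using exp_converges[of \<mu>] by (intro sums_mult2) (simp add: divide_inverse mult.commute)
  then show ?thesis
    using assms by (simp add: exp_minus)
qed

lemma sums_exp_times_index: "(\<lambda>k. real k * s ^ k / fact k) sums (s * exp s)"
proof -
  have "(\<lambda>k. s * (s ^ k / fact k)) sums (s * exp s)"
    using exp_converges[of s] by (intro sums_mult) (simp add: divide_inverse mult.commute)
  moreover have "real (Suc k) * s ^ Suc k / fact (Suc k) = s * (s ^ k / fact k)" for k
    by (simp add: field_simps del: of_nat_Suc)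
  ultimately have "(\<lambda>k. real (Suc k) * s ^ Suc k / fact (Suc k)) sums (s * exp s)"
    by simp
  then show ?thesis
    using sums_Suc_iff[of "\<lambda>k. real k * s ^ k / fact k"] by simp
qed

lemma poisson_score_sums:
  assumes "\<mu> > 0"
  shows "(\<lambda>k. pmf (poisson_pmf \<mu>) k * score h0 l (real k))
           sums (exp (l * h0 - \<mu>) * exp (\<mu> * exp (- l)) * (\<mu> * exp (- l) - h0))"
proof -
  define s where "s = \<mu> * exp (- l)"
  have eq: "pmf (poisson_pmf \<mu>) k * score h0 l (real k) =
        exp (l * h0 - \<mu>) * (real k * s ^ k / fact k - h0 * (s ^ k / fact k))" for k
  proof -
    have "exp (- l * (real k - h0)) = exp (l * h0) * exp (- l) ^ k"
      by (simp add: exp_of_nat_mult[symmetric] exp_add[symmetric] algebra_simps)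
    moreover have "exp (l * h0 - \<mu>) = exp (l * h0) * exp (- \<mu>)"
      by (simp add: exp_diff exp_minus field_simps)
    ultimately show ?thesis
      using assms by (simp add: score_def s_def power_mult_distrib field_simps)
  qed
  have "exp (l * h0 - \<mu>) * (s * exp s - h0 * exp s) = exp (l * h0 - \<mu>) * exp (\<mu> * exp (- l)) * (\<mu> * exp (- l) - h0)"
    by (simp add: s_def algebra_simps)
  moreover have "(\<lambda>k. pmf (poisson_pmf \<mu>) k * score h0 l (real k)) sums (exp (l * h0 - \<mu>) * (s * exp s - h0 * exp s))"
    unfolding eq using exp_converges[of s]
    by (intro sums_mult sums_diff sums_exp_times_index) (simp add: divide_inverse mult.commute)
  ultimately show ?thesis
    by (simp only:)
qed

lemma expectation_nat_pmf_truncation: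
  fixes P :: "nat pmf" and \<phi> :: "nat \<Rightarrow> real"
  assumes bounded: "\<And>k. \<bar>\<phi> k\<bar> \<le> B"
  shows "\<bar>measure_pmf.expectation P \<phi> - (\<Sum>k<N. pmf P k * \<phi> k)\<bar> \<le> B * (1 - (\<Sum>k<N. pmf P k))"
proof -
  define tail where "tail = (\<lambda>k. if k < N then 0 else \<phi> k)"
  have "0 \<le> B"
    using bounded[of 0] by linarith
  have integrable: "integrable (measure_pmf P) f" if "\<And>k. \<bar>f k\<bar> \<le> B" for f :: "nat \<Rightarrow> real"
    using that by (intro measure_pmf.integrable_const_bound[where B = B]) auto
  have "measure_pmf.expectation P \<phi> =
      measure_pmf.expectation P (\<lambda>k. if k < N then \<phi> k else 0) + measure_pmf.expectation P tail"
    unfolding tail_def using bounded \<open>0 \<le> B\<close>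
    by (subst Bochner_Integration.integral_add[symmetric]) (auto intro!: integrable Bochner_Integration.integral_cong)
  also have "measure_pmf.expectation P (\<lambda>k. if k < N then \<phi> k else 0) = (\<Sum>k<N. pmf P k * \<phi> k)"
    by (subst integral_measure_pmf[of "{..<N}"]) (auto split: if_splits intro!: sum.cong)
  finally have split: "measure_pmf.expectation P \<phi> - (\<Sum>k<N. pmf P k * \<phi> k) = measure_pmf.expectation P tail"
    by simp
  have "\<bar>measure_pmf.expectation P tail\<bar> \<le> measure_pmf.expectation P (\<lambda>k. \<bar>tail k\<bar>)"
    by (rule integral_abs_bound)
  also have "\<dots> \<le> measure_pmf.expectation P (\<lambda>k. B * indicator (- {..<N}) k)"
    using bounded \<open>0 \<le> B\<close> unfolding tail_def
    by (intro integral_mono integrable) (auto simp: indicator_def)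
  also have "\<dots> = B * measure_pmf.prob P (- {..<N})"
    by simp
  also have "measure_pmf.prob P (- {..<N}) = 1 - (\<Sum>k<N. pmf P k)"
    using measure_pmf.prob_compl[of "{..<N}" P] by (simp add: Compl_eq_Diff_UNIV measure_measure_pmf_finite)
  finally show ?thesis
    unfolding split .
qed

lemma summable_mult_bounded:
  fixes \<pi> \<phi> :: "nat \<Rightarrow> real"
  assumes "\<pi> sums s" and "\<And>k. 0 \<le> \<pi> k" and "\<And>k. \<bar>\<phi> k\<bar> \<le> B"
  shows "summable (\<lambda>k. \<pi> k * \<phi> k)"
proof (rule summable_comparison_test')
  show "summable (\<lambda>k. B * \<pi> k)"
    using assms(1) by (intro summable_mult sums_summable)
  show "norm (\<pi> k * \<phi> k) \<le> B * \<pi> k" for k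
    using mult_right_mono[OF assms(3) assms(2)] assms(2)[of k] by (simp add: abs_mult mult.commute)
qed

lemma expectation_tendsto_of_pmf_tendsto:
  fixes P :: "nat \<Rightarrow> nat pmf" and \<pi> \<phi> :: "nat \<Rightarrow> real"
  assumes pmf_lim: "\<And>k. (\<lambda>n. pmf (P n) k) \<longlonglongrightarrow> \<pi> k" and mass: "\<pi> sums 1"
    and bounded: "\<And>k. \<bar>\<phi> k\<bar> \<le> B"
  shows "(\<lambda>n. measure_pmf.expectation (P n) \<phi>) \<longlonglongrightarrow> (\<Sum>k. \<pi> k * \<phi> k)"
proof (rule tendstoI)
  fix \<epsilon> :: real
  assume "\<epsilon> > 0"
  define S where "S = (\<Sum>k. \<pi> k * \<phi> k)"
  define \<delta> where "\<delta> = \<epsilon> / (4 * (B + 1))"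
  have "0 \<le> B"
    using bounded[of 0] by linarith
  then have "\<delta> > 0" and B\<delta>: "B * \<delta> < \<epsilon> / 4"
    using \<open>\<epsilon> > 0\<close> unfolding \<delta>_def by (simp_all add: field_simps)
  have \<pi>_nonneg: "\<pi> k \<ge> 0" for k
    using pmf_lim by (rule tendsto_lowerbound) (simp_all add: always_eventually)
  have "summable (\<lambda>k. \<pi> k * \<phi> k)"
    using mass \<pi>_nonneg bounded by (rule summable_mult_bounded)
  then have "(\<lambda>N. \<Sum>k<N. \<pi> k * \<phi> k) \<longlonglongrightarrow> S"
    unfolding S_def by (rule summable_LIMSEQ)
  moreover have "(\<lambda>N. 1 - (\<Sum>k<N. \<pi> k)) \<longlonglongrightarrow> 1 - 1"
    using mass unfolding sums_def by (intro tendsto_diff tendsto_const)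
  ultimately have "\<forall>\<^sub>F N in sequentially. \<bar>(\<Sum>k<N. \<pi> k * \<phi> k) - S\<bar> < \<epsilon> / 4 \<and> 1 - (\<Sum>k<N. \<pi> k) < \<delta>"
    using tendstoD[of _ S sequentially "\<epsilon> / 4"] order_tendstoD(2)[of _ 0 sequentially \<delta>] \<open>\<epsilon> > 0\<close> \<open>\<delta> > 0\<close>
    unfolding dist_real_def by (intro eventually_conj) simp_all
  then obtain N where head: "\<bar>(\<Sum>k<N. \<pi> k * \<phi> k) - S\<bar> < \<epsilon> / 4" and tail: "1 - (\<Sum>k<N. \<pi> k) < \<delta>"
    by (auto simp: eventually_sequentially)
  have "(\<lambda>n. \<Sum>k<N. pmf (P n) k * \<phi> k) \<longlonglongrightarrow> (\<Sum>k<N. \<pi> k * \<phi> k)"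
    by (intro tendsto_intros pmf_lim)
  moreover have "(\<lambda>n. 1 - (\<Sum>k<N. pmf (P n) k)) \<longlonglongrightarrow> 1 - (\<Sum>k<N. \<pi> k)"
    by (intro tendsto_intros pmf_lim)
  ultimately have "\<forall>\<^sub>F n in sequentially. \<bar>(\<Sum>k<N. pmf (P n) k * \<phi> k) - (\<Sum>k<N. \<pi> k * \<phi> k)\<bar> < \<epsilon> / 4 \<and>
      1 - (\<Sum>k<N. pmf (P n) k) < \<delta>"
    using tendstoD[of _ "\<Sum>k<N. \<pi> k * \<phi> k" sequentially "\<epsilon> / 4"] order_tendstoD(2)[of _ "1 - (\<Sum>k<N. \<pi> k)" sequentially \<delta>]
      \<open>\<epsilon> > 0\<close> tail
    unfolding dist_real_def by (intro eventually_conj) simp_all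
  then show "\<forall>\<^sub>F n in sequentially. dist (measure_pmf.expectation (P n) \<phi>) S < \<epsilon>"
  proof eventually_elim
    case (elim n)
    have "\<bar>measure_pmf.expectation (P n) \<phi> - (\<Sum>k<N. pmf (P n) k * \<phi> k)\<bar> \<le> B * \<delta>"
      using expectation_nat_pmf_truncation[of \<phi> B "P n" N, OF bounded] elim \<open>0 \<le> B\<close>
      by (smt (verit) mult_left_mono)
    then show ?case
      using elim head B\<delta> unfolding dist_real_def by linarith
  qed
qed

lemma alternating_choose_partial_sum:
  assumes "M \<ge> 1"
  shows "(\<Sum>i\<le>s. (-1::real) ^ i * real (M choose i)) = (-1) ^ s * real ((M - 1) choose s)"
proof (induction s)
  case (Suc s)
  obtain M' where "M = Suc M'"
    using assms by (cases M) auto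
  then show ?case
    using Suc by (simp add: algebra_simps)
qed simp

text \<open>Bonferroni inequalities: the truncations of the inclusion-exclusion formula for the
  indicator of \<open>X = k\<close> in terms of binomial coefficients alternately over- and underestimate it.\<close>

lemma bonferroni_choose:
  "(-1) ^ s * ((\<Sum>i\<le>s. (-1::real) ^ i * real ((k + i) choose k) * real (N choose (k + i)))
      - of_bool (N = k)) \<ge> 0"
proof -
  have eq: "real ((k + i) choose k) * real (N choose (k + i)) = real (N choose k) * real ((N - k) choose i)" for i
  proof (cases "k + i \<le> N")
    case True
    have "(N choose (k + i)) * ((k + i) choose k) = (N choose k) * ((N - k) choose (k + i - k))"
      by (rule choose_mult) (use True in auto)
    then show ?thesis
      by (simp add: mult.commute flip: of_nat_mult)
  next
    case False
    then have "N choose (k + i) = 0" and "(N choose k) * ((N - k) choose i) = 0"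
      by (cases "k \<le> N"; simp)+
    then show ?thesis
      by (metis of_nat_0 of_nat_mult mult_zero_right)
  qed
  have sum_eq: "(\<Sum>i\<le>s. (-1::real) ^ i * real ((k + i) choose k) * real (N choose (k + i))) =
      real (N choose k) * (\<Sum>i\<le>s. (-1) ^ i * real ((N - k) choose i))"
    by (simp add: sum_distrib_left mult.assoc eq mult.left_commute)
  consider "N < k" | "N = k" | "N > k"
    by linarith
  then show ?thesis
  proof cases
    case 2
    have "(\<Sum>i\<le>s. (-1::real) ^ i * real (0 choose i)) = 1"
      by (induction s) auto
    then show ?thesis
      unfolding sum_eq using 2 by simp
  next
    case 3
    then show ?thesis
      unfolding sum_eq by (simp add: alternating_choose_partial_sum algebra_simps flip: power_add)
  qed (unfold sum_eq, simp add: binomial_eq_0)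
qed

lemma poisson_bonferroni_sums_tendsto:
  "(\<lambda>s. \<Sum>i\<le>s. (-1::real) ^ i * real ((k + i) choose k) * (\<mu> ^ (k + i) / fact (k + i)))
     \<longlonglongrightarrow> \<mu> ^ k / fact k * exp (- \<mu>)"
proof -
  have eq: "(-1::real) ^ i * real ((k + i) choose k) * (\<mu> ^ (k + i) / fact (k + i)) =
        \<mu> ^ k / fact k * ((- \<mu>) ^ i / fact i)" for i
  proof -
    have "real ((k + i) choose k) = fact (k + i) / (fact k * fact i)"
      by (subst binomial_fact) auto
    moreover have "(fact (k + i) :: real) \<noteq> 0"
      by simp
    ultimately show ?thesis
      by (simp only: power_add power_minus[of \<mu>]) (simp add: divide_simps)
  qed
  have "(\<lambda>s. \<Sum>i\<le>s. (- \<mu>) ^ i / fact i) \<longlonglongrightarrow> exp (- \<mu>)"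
    using LIMSEQ_Suc[OF exp_converges[of "- \<mu>", unfolded sums_def]]
    by (simp add: lessThan_Suc_atMost divide_inverse mult.commute)
  then show ?thesis
    unfolding eq sum_distrib_left[symmetric] by (rule tendsto_mult_left)
qed

lemma bonferroni_expectation:
  fixes P :: "nat pmf"
  assumes "finite (set_pmf P)"
  shows "(-1) ^ s * ((\<Sum>i\<le>s. (-1::real) ^ i * real ((k + i) choose k) *
            measure_pmf.expectation P (\<lambda>x. real (x choose (k + i)))) - pmf P k) \<ge> 0"
proof -
  define S where "S = (\<lambda>x. \<Sum>i\<le>s. (-1::real) ^ i * real ((k + i) choose k) * real (x choose (k + i)))"
  have integrable: "integrable (measure_pmf P) f" for f :: "nat \<Rightarrow> real"
    using assms by (rule integrable_measure_pmf_finite)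
  have "0 \<le> measure_pmf.expectation P (\<lambda>x. (-1) ^ s * (S x - indicator {k} x))"
  proof (rule Bochner_Integration.integral_nonneg)
    show "0 \<le> (-1) ^ s * (S x - indicator {k} x)" for x
      using bonferroni_choose[of s k x] unfolding S_def by (simp only: indicator_def singleton_iff eq_commute)
  qed
  also have "\<dots> = (-1) ^ s * (measure_pmf.expectation P S - pmf P k)"
    by (simp add: integrable measure_pmf_single)
  also have "measure_pmf.expectation P S = (\<Sum>i\<le>s. (-1::real) ^ i * real ((k + i) choose k) *
      measure_pmf.expectation P (\<lambda>x. real (x choose (k + i))))"
    unfolding S_def by (subst Bochner_Integration.integral_sum) (auto intro: integrable)
  finally show ?thesis .
qed

theorem pmf_tendsto_poisson_of_binomial_moments:
  fixes P :: "nat \<Rightarrow> nat pmf"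
  assumes "\<mu> > 0" and finite: "\<And>n. finite (set_pmf (P n))"
    and moments: "\<And>j. (\<lambda>n. measure_pmf.expectation (P n) (\<lambda>x. real (x choose j))) \<longlonglongrightarrow> \<mu> ^ j / fact j"
  shows "(\<lambda>n. pmf (P n) k) \<longlonglongrightarrow> pmf (poisson_pmf \<mu>) k"
proof (rule tendstoI)
  fix \<epsilon> :: real
  assume "\<epsilon> > 0"
  define p where "p = pmf (poisson_pmf \<mu>) k"
  define B where "B = (\<lambda>n s. \<Sum>i\<le>s. (-1::real) ^ i * real ((k + i) choose k) *
      measure_pmf.expectation (P n) (\<lambda>x. real (x choose (k + i))))"
  define T where "T = (\<lambda>s. \<Sum>i\<le>s. (-1::real) ^ i * real ((k + i) choose k) * (\<mu> ^ (k + i) / fact (k + i)))"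
  have B_lim: "(\<lambda>n. B n s) \<longlonglongrightarrow> T s" for s
    unfolding B_def T_def by (intro tendsto_sum tendsto_mult_left moments)
  have "T \<longlonglongrightarrow> p"
    using poisson_bonferroni_sums_tendsto \<open>\<mu> > 0\<close> by (simp add: T_def p_def)
  then have "\<forall>\<^sub>F s in sequentially. \<bar>T s - p\<bar> < \<epsilon>"
    using tendstoD[of T p sequentially \<epsilon>] \<open>\<epsilon> > 0\<close> by (simp add: dist_real_def)
  then obtain s0 where s0: "\<And>s. s \<ge> s0 \<Longrightarrow> \<bar>T s - p\<bar> < \<epsilon>"
    by (auto simp: eventually_sequentially)
  define s where "s = 2 * s0"
  have "T s < p + \<epsilon>" and "p - \<epsilon> < T (Suc s)"
    using s0[of s] s0[of "Suc s"] by (auto simp: s_def abs_less_iff)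
  then have "\<forall>\<^sub>F n in sequentially. B n s < p + \<epsilon> \<and> p - \<epsilon> < B n (Suc s)"
    by (intro eventually_conj order_tendstoD[OF B_lim])
  then show "\<forall>\<^sub>F n in sequentially. dist (pmf (P n) k) p < \<epsilon>"
  proof eventually_elim
    case (elim n)
    have "pmf (P n) k \<le> B n s" and "B n (Suc s) \<le> pmf (P n) k"
      using bonferroni_expectation[OF finite, of s k n] bonferroni_expectation[OF finite, of "Suc s" k n]
      by (simp_all add: B_def s_def)
    then show ?case
      using elim by (simp add: dist_real_def abs_less_iff)
  qed
qed

section \<open>Consistency of the estimator\<close>

lemma score_lower_bound:
  assumes "0 \<le> x" and "0 \<le> h0"
  shows "- (h0 * exp (\<bar>l\<bar> * h0)) \<le> score h0 l x"
proof (cases "x \<ge> h0")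
  case True
  then have "0 \<le> score h0 l x"
    unfolding score_def by simp
  moreover have "- (h0 * exp (\<bar>l\<bar> * h0)) \<le> 0"
    using assms by simp
  ultimately show ?thesis
    by linarith
next
  case False
  then have "\<bar>- l * (x - h0)\<bar> \<le> \<bar>l\<bar> * h0"
    using assms by (simp add: abs_mult mult_left_mono)
  then have "exp (- l * (x - h0)) \<le> exp (\<bar>l\<bar> * h0)"
    by simp
  then have "- h0 * exp (\<bar>l\<bar> * h0) \<le> - h0 * exp (- l * (x - h0))"
    using assms by (simp add: mult_left_mono)
  moreover have "- h0 * exp (- l * (x - h0)) \<le> (x - h0) * exp (- l * (x - h0))"
    using assms by (intro mult_right_mono) auto
  ultimately show ?thesis
    unfolding score_def by linarith
qed

lemma score_upper_bound:
  assumes "l > 0"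
  shows "score h0 l x \<le> 1 / l"
proof (cases "x \<ge> h0")
  case True
  have "l * (x - h0) \<le> exp (l * (x - h0))"
    using exp_ge_add_one_self[of "l * (x - h0)"] by linarith
  then have "x - h0 \<le> exp (l * (x - h0)) / l"
    using assms by (simp add: pos_le_divide_eq mult.commute)
  then have "(x - h0) * exp (- l * (x - h0)) \<le> exp (l * (x - h0)) / l * exp (- l * (x - h0))"
    by (rule mult_right_mono) simp
  also have "\<dots> = 1 / l"
    by (simp flip: exp_add)
  finally show ?thesis
    unfolding score_def .
next
  case False
  then have "score h0 l x \<le> 0"
    unfolding score_def by (simp add: mult_nonpos_nonneg)
  moreover have "0 < 1 / l"
    using assms by simp
  ultimately show ?thesis
    by linarith
qed

lemma score_nonneg: "h0 \<le> x \<Longrightarrow> 0 \<le> score h0 l x"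
  unfolding score_def by simp

lemma whp_sum_score_neg:
  fixes Q :: "nat \<Rightarrow> 'a pmf" and X :: "nat \<Rightarrow> 'a \<Rightarrow> nat"
  assumes "0 \<le> h0" and "0 < \<mu>" and "0 < l" and "\<mu> * exp (- l) < h0"
    and law: "\<And>k. (\<lambda>n. pmf (map_pmf (X n) (Q n)) k) \<longlonglongrightarrow> pmf (poisson_pmf \<mu>) k"
  shows "whp (\<lambda>n. Pi_pmf {..<n} d (\<lambda>_. Q n)) (\<lambda>n \<omega>. (\<Sum>i<n. score h0 l (real (X n (\<omega> i)))) < 0)"
proof (rule whp_sum_neg[where \<phi> = "\<lambda>n x. score h0 l (real (X n x))"])
  define L where "L = exp (l * h0 - \<mu>) * exp (\<mu> * exp (- l)) * (\<mu> * exp (- l) - h0)"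
  have bounds: "- (h0 * exp (\<bar>l\<bar> * h0)) \<le> score h0 l (real k) \<and> score h0 l (real k) \<le> 1 / l" for k
    using score_lower_bound[of "real k" h0 l] score_upper_bound[OF \<open>0 < l\<close>, of h0 "real k"] \<open>0 \<le> h0\<close> by simp
  then show "- (h0 * exp (\<bar>l\<bar> * h0)) \<le> score h0 l (real (X n x)) \<and> score h0 l (real (X n x)) \<le> 1 / l" for n x .
  have "0 \<le> h0 * exp (\<bar>l\<bar> * h0)" and "0 < 1 / l"
    using \<open>0 \<le> h0\<close> \<open>0 < l\<close> by simp_all
  then have "\<bar>score h0 l (real k)\<bar> \<le> h0 * exp (\<bar>l\<bar> * h0) + 1 / l" for k
    using bounds[of k] unfolding abs_le_iff by linarith
  then have "(\<lambda>n. measure_pmf.expectation (map_pmf (X n) (Q n)) (\<lambda>k. score h0 l (real k)))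
      \<longlonglongrightarrow> (\<Sum>k. pmf (poisson_pmf \<mu>) k * score h0 l (real k))"
    by (intro expectation_tendsto_of_pmf_tendsto law poisson_pmf_sums \<open>0 < \<mu>\<close>)
  then show "(\<lambda>n. measure_pmf.expectation (Q n) (\<lambda>x. score h0 l (real (X n x)))) \<longlonglongrightarrow> L"
    using sums_unique[OF poisson_score_sums[OF \<open>0 < \<mu>\<close>]] by (simp add: L_def)
  show "L < 0"
    using \<open>\<mu> * exp (- l) < h0\<close> by (simp add: L_def mult_pos_neg)
qed

text \<open>For \<open>l \<le> 0\<close> the score is unbounded above, so Hoeffding's inequality is applied to a
  truncation of it, which still has positive Poisson mean.\<close>

lemma poisson_truncated_score_suminf_pos:
  assumes "0 \<le> h0" and "0 < \<mu>" and "h0 < \<mu> * exp (- l)"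
  obtains K where "0 \<le> K" and "0 < (\<Sum>k. pmf (poisson_pmf \<mu>) k * min (score h0 l (real k)) K)"
proof -
  define \<pi> where "\<pi> = pmf (poisson_pmf \<mu>)"
  define g where "g = (\<lambda>k. score h0 l (real k))"
  have "(\<lambda>N. \<Sum>k<N. \<pi> k * g k) \<longlonglongrightarrow> exp (l * h0 - \<mu>) * exp (\<mu> * exp (- l)) * (\<mu> * exp (- l) - h0)"
    using poisson_score_sums[OF \<open>0 < \<mu>\<close>] unfolding sums_def \<pi>_def g_def .
  moreover have "exp (l * h0 - \<mu>) * exp (\<mu> * exp (- l)) * (\<mu> * exp (- l) - h0) > 0"
    using assms by simp
  ultimately have "\<forall>\<^sub>F N in sequentially. 0 < (\<Sum>k<N. \<pi> k * g k) \<and> nat \<lceil>h0\<rceil> \<le> N"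
    by (intro eventually_conj order_tendstoD(1) eventually_ge_at_top)
  then obtain N where head: "0 < (\<Sum>k<N. \<pi> k * g k)" and "h0 \<le> real N"
    by (auto simp: eventually_sequentially)
  define K where "K = (\<Sum>k<N. \<bar>g k\<bar>)"
  have "0 \<le> K"
    unfolding K_def by (simp add: sum_nonneg)
  have "\<bar>min (g k) K\<bar> \<le> h0 * exp (\<bar>l\<bar> * h0) + K" for k
    using score_lower_bound[of "real k" h0 l] \<open>0 \<le> h0\<close> \<open>0 \<le> K\<close>
      mult_nonneg_nonneg[OF \<open>0 \<le> h0\<close> exp_ge_zero[of "\<bar>l\<bar> * h0"]]
    unfolding g_def by arith
  then have summable: "summable (\<lambda>k. \<pi> k * min (g k) K)"
    using poisson_pmf_sums[OF \<open>0 < \<mu>\<close>] unfolding \<pi>_def by (intro summable_mult_bounded) auto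
  have "min (g k) K = g k" if "k < N" for k
    using member_le_sum[of k "{..<N}" "\<lambda>k. \<bar>g k\<bar>"] that unfolding K_def by simp
  then have "0 < (\<Sum>k<N. \<pi> k * min (g k) K)"
    using head by simp
  also have "\<dots> \<le> (\<Sum>k. \<pi> k * min (g k) K)"
  proof (rule sum_le_suminf)
    show "summable (\<lambda>k. \<pi> k * min (g k) K)"
      by (fact summable)
    have "0 \<le> g k" if "k \<ge> N" for k
      using \<open>h0 \<le> real N\<close> that unfolding g_def by (intro score_nonneg) simp
    then show "0 \<le> \<pi> k * min (g k) K" if "k \<in> - {..<N}" for k
      using that \<open>0 \<le> K\<close> unfolding \<pi>_def by simp
  qed simp
  finally show ?thesis
    using that \<open>0 \<le> K\<close> unfolding \<pi>_def g_def by blast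
qed

lemma whp_sum_score_pos:
  fixes Q :: "nat \<Rightarrow> 'a pmf" and X :: "nat \<Rightarrow> 'a \<Rightarrow> nat"
  assumes "0 \<le> h0" and "0 < \<mu>" and "h0 < \<mu> * exp (- l)"
    and law: "\<And>k. (\<lambda>n. pmf (map_pmf (X n) (Q n)) k) \<longlonglongrightarrow> pmf (poisson_pmf \<mu>) k"
  shows "whp (\<lambda>n. Pi_pmf {..<n} d (\<lambda>_. Q n)) (\<lambda>n \<omega>. (\<Sum>i<n. score h0 l (real (X n (\<omega> i)))) > 0)"
proof -
  obtain K where "0 \<le> K" and pos: "0 < (\<Sum>k. pmf (poisson_pmf \<mu>) k * min (score h0 l (real k)) K)"
    using poisson_truncated_score_suminf_pos assms by blast
  define \<phi> where "\<phi> = (\<lambda>k. min (score h0 l (real k)) K)"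
  define A where "A = h0 * exp (\<bar>l\<bar> * h0)"
  have "0 \<le> A"
    using \<open>0 \<le> h0\<close> by (simp add: A_def)
  have bounds: "- A \<le> \<phi> k \<and> \<phi> k \<le> K" for k
    using score_lower_bound[of "real k" h0 l, folded A_def] \<open>0 \<le> h0\<close> \<open>0 \<le> A\<close> \<open>0 \<le> K\<close>
    unfolding \<phi>_def by simp
  then have "\<bar>\<phi> k\<bar> \<le> A + K" for k
    unfolding abs_le_iff using bounds[of k] \<open>0 \<le> A\<close> \<open>0 \<le> K\<close> by linarith
  then have "(\<lambda>n. measure_pmf.expectation (map_pmf (X n) (Q n)) \<phi>) \<longlonglongrightarrow> (\<Sum>k. pmf (poisson_pmf \<mu>) k * \<phi> k)"
    by (intro expectation_tendsto_of_pmf_tendsto law poisson_pmf_sums \<open>0 < \<mu>\<close>)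
  then have lim: "(\<lambda>n. measure_pmf.expectation (Q n) (\<lambda>x. - \<phi> (X n x))) \<longlonglongrightarrow> - (\<Sum>k. pmf (poisson_pmf \<mu>) k * \<phi> k)"
    by (simp add: tendsto_minus_cancel_left)
  have "whp (\<lambda>n. Pi_pmf {..<n} d (\<lambda>_. Q n)) (\<lambda>n \<omega>. (\<Sum>i<n. - \<phi> (X n (\<omega> i))) < 0)"
  proof (rule whp_sum_neg[where \<phi> = "\<lambda>n x. - \<phi> (X n x)" and a = "- K" and b = A])
    show "- K \<le> - \<phi> (X n x) \<and> - \<phi> (X n x) \<le> A" for n x
      using bounds[of "X n x"] by linarith
    show "- (\<Sum>k. pmf (poisson_pmf \<mu>) k * \<phi> k) < 0"
      using pos unfolding \<phi>_def by linarith
  qed (fact lim)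
  then show ?thesis
  proof (rule whp_mono)
    fix n \<omega>
    assume "(\<Sum>i<n. - \<phi> (X n (\<omega> i))) < 0"
    moreover have "(\<Sum>i<n. \<phi> (X n (\<omega> i))) \<le> (\<Sum>i<n. score h0 l (real (X n (\<omega> i))))"
      unfolding \<phi>_def by (intro sum_mono) simp
    ultimately show "(\<Sum>i<n. score h0 l (real (X n (\<omega> i)))) > 0"
      by (simp add: sum_negf)
  qed
qed

theorem whp_estimator_close:
  fixes Q :: "nat \<Rightarrow> 'a pmf" and X :: "nat \<Rightarrow> 'a \<Rightarrow> nat"
  assumes "0 < h0" and "h0 \<le> \<mu>" and "\<epsilon> > 0"
    and law: "\<And>k. (\<lambda>n. pmf (map_pmf (X n) (Q n)) k) \<longlonglongrightarrow> pmf (poisson_pmf \<mu>) k"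
  shows "whp (\<lambda>n. Pi_pmf {..<n} d (\<lambda>_. Q n))
           (\<lambda>n \<omega>. let F = (\<lambda>l. \<Sum>i<n. score h0 l (real (X n (\<omega> i))))
                  in (\<exists>!l. F l = 0) \<and> \<bar>(THE l. F l = 0) - ln (\<mu> / h0)\<bar> < \<epsilon>)"
proof -
  define l1 where "l1 = ln (\<mu> / h0) - \<epsilon> / 2"
  define l2 where "l2 = ln (\<mu> / h0) + \<epsilon> / 2"
  have "0 < \<mu>"
    using assms by simp
  have "\<mu> * exp (- ln (\<mu> / h0)) = h0"
    using \<open>0 < \<mu>\<close> \<open>0 < h0\<close> by (simp add: exp_minus)
  moreover have "exp (- l2) < exp (- ln (\<mu> / h0))" and "exp (- ln (\<mu> / h0)) < exp (- l1)"
    using \<open>\<epsilon> > 0\<close> by (simp_all add: l1_def l2_def)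
  ultimately have "\<mu> * exp (- l2) < h0" and "h0 < \<mu> * exp (- l1)"
    using \<open>0 < \<mu>\<close> by (metis mult_strict_left_mono)+
  moreover have "0 < l2"
  proof -
    have "0 \<le> ln (\<mu> / h0)"
      using assms by simp
    then show ?thesis
      using \<open>\<epsilon> > 0\<close> by (simp add: l2_def)
  qed
  ultimately have "whp (\<lambda>n. Pi_pmf {..<n} d (\<lambda>_. Q n))
      (\<lambda>n \<omega>. (\<Sum>i<n. score h0 l1 (real (X n (\<omega> i)))) > 0 \<and> (\<Sum>i<n. score h0 l2 (real (X n (\<omega> i)))) < 0)"
    using assms \<open>0 < \<mu>\<close> by (intro whp_conj whp_sum_score_pos whp_sum_score_neg) auto
  then show ?thesis
  proof (rule whp_mono)
    fix n \<omega>
    assume "(\<Sum>i<n. score h0 l1 (real (X n (\<omega> i)))) > 0 \<and> (\<Sum>i<n. score h0 l2 (real (X n (\<omega> i)))) < 0"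
    then have "(\<exists>!l. (\<Sum>i<n. score h0 l (real (X n (\<omega> i)))) = 0) \<and>
        l1 < (THE l. (\<Sum>i<n. score h0 l (real (X n (\<omega> i)))) = 0) \<and>
        (THE l. (\<Sum>i<n. score h0 l (real (X n (\<omega> i)))) = 0) < l2"
      using \<open>\<epsilon> > 0\<close> by (intro sum_score_unique_root) (auto simp: l1_def l2_def)
    then show "let F = (\<lambda>l. \<Sum>i<n. score h0 l (real (X n (\<omega> i))))
        in (\<exists>!l. F l = 0) \<and> \<bar>(THE l. F l = 0) - ln (\<mu> / h0)\<bar> < \<epsilon>"
      unfolding l1_def l2_def Let_def by (simp add: abs_less_iff)
  qed
qed

section \<open>Random graphs\<close>

lemma finite_all_edges: "finite (all_edges m)"
proof -
  have "all_edges m \<subseteq> Pow {0..<m}"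
    unfolding all_edges_def by auto
  then show ?thesis by (rule finite_subset) simp
qed

lemma set_pmf_gnp: "set_pmf (gnp m p) \<subseteq> Pow (all_edges m)"
  unfolding gnp_def by auto

lemma finite_set_pmf_gnp: "finite (set_pmf (gnp m p))"
  using set_pmf_gnp finite_all_edges by (meson finite_Pow_iff finite_subset)

lemma prob_gnp_supset:
  assumes S: "S \<subseteq> all_edges m" and p: "0 \<le> p" "p \<le> 1"
  shows "measure_pmf.prob (gnp m p) {G. S \<subseteq> G} = p ^ card S"
proof -
  define B where "B = (\<lambda>e. if e \<in> S then {True} else (UNIV :: bool set))"
  have pre: "(\<lambda>f. {e \<in> all_edges m. f e}) -` {G. S \<subseteq> G} = Pi (all_edges m) B"
    using S unfolding B_def Pi_def by auto
  have "measure_pmf.prob (gnp m p) {G. S \<subseteq> G} =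
        measure_pmf.prob (Pi_pmf (all_edges m) False (\<lambda>_. bernoulli_pmf p)) (Pi (all_edges m) B)"
    unfolding gnp_def measure_map_pmf pre ..
  also have "\<dots> = (\<Prod>x\<in>all_edges m. measure_pmf.prob (bernoulli_pmf p) (B x))"
    by (rule measure_Pi_pmf_Pi[OF finite_all_edges])
  also have "\<dots> = (\<Prod>x\<in>all_edges m. if x \<in> S then p else 1)"
    by (intro prod.cong refl) (use p in \<open>auto simp: B_def measure_pmf_single\<close>)
  also have "\<dots> = p ^ card S"
    using S finite_all_edges by (simp add: prod.If_cases Int_absorb1)
  finally show ?thesis .
qed

lemma card_distinct_lists:
  assumes fin: "finite B"
  shows "card {xs. length xs = j \<and> distinct xs \<and> set xs \<subseteq> B} = (card B choose j) * fact j"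
proof (cases "j \<le> card B")
  case True
  have "card {xs. length xs = j \<and> distinct xs \<and> set xs \<subseteq> B} = \<Prod>{card B - j + 1 .. card B}"
    by (rule card_lists_distinct_length_eq[OF fin True])
  also have "\<dots> = fact (card B) div fact (card B - j)"
    using fact_div_fact[of "card B - j" "card B"] True by simp
  also have "\<dots> = (card B choose j) * fact j"
  proof -
    have "fact j * fact (card B - j) * (card B choose j) = fact (card B)"
      by (rule binomial_fact_lemma[OF True])
    then show ?thesis by (metis fact_nonzero mult.commute mult.left_commute nonzero_mult_div_cancel_left)
  qed
  finally show ?thesis .
next
  case False
  have "{xs. length xs = j \<and> distinct xs \<and> set xs \<subseteq> B} = {}"
  proof (rule ccontr)
    assume "\<not> ?thesis"
    then obtain xs where xs: "length xs = j" "distinct xs" "set xs \<subseteq> B"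
      by blast
    then have "card (set xs) = j"
      by (simp add: distinct_card)
    moreover have "card (set xs) \<le> card B"
      using xs(3) fin by (rule card_mono[rotated])
    ultimately show False using False by simp
  qed
  moreover have "card B choose j = 0"
    using False by simp
  ultimately show ?thesis by (simp only: card.empty mult_0)
qed

lemma card_lists_map_eq:
  fixes h :: "'a \<Rightarrow> 'b"
  assumes fin: "finite A" and fib: "\<And>y. y \<in> h ` A \<Longrightarrow> card {x\<in>A. h x = y} = c"
  shows "set xs \<subseteq> h ` A \<Longrightarrow> card {ts. set ts \<subseteq> A \<and> map h ts = xs} = c ^ length xs"
proof (induction xs)
  case Nil
  have "{ts. set ts \<subseteq> A \<and> map h ts = []} = {[]}"
    by auto
  then show ?case by simp
next
  case (Cons y xs)
  have eq: "{ts. set ts \<subseteq> A \<and> map h ts = y # xs} =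
        (\<lambda>(x, ts). x # ts) ` ({x\<in>A. h x = y} \<times> {ts. set ts \<subseteq> A \<and> map h ts = xs})"
  proof (intro equalityI subsetI)
    fix ts assume "ts \<in> {ts. set ts \<subseteq> A \<and> map h ts = y # xs}"
    then show "ts \<in> (\<lambda>(x, ts). x # ts) ` ({x\<in>A. h x = y} \<times> {ts. set ts \<subseteq> A \<and> map h ts = xs})"
      by (cases ts) auto
  qed auto
  have inj: "inj_on (\<lambda>(x, ts). x # ts) X" for X :: "('a \<times> 'a list) set"
    by (auto simp: inj_on_def)
  have "card {ts. set ts \<subseteq> A \<and> map h ts = y # xs} = card {x\<in>A. h x = y} * card {ts. set ts \<subseteq> A \<and> map h ts = xs}"
    unfolding eq by (subst card_image[OF inj]) (simp add: card_cartesian_product)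
  then show ?case using Cons fib by simp
qed

lemma card_lists_distinct_map:
  fixes h :: "'a \<Rightarrow> 'b"
  assumes fin: "finite A" and fib: "\<And>y. y \<in> h ` A \<Longrightarrow> card {x\<in>A. h x = y} = c"
  shows "card {ts. length ts = j \<and> set ts \<subseteq> A \<and> distinct (map h ts)} =
         c ^ j * card {xs. length xs = j \<and> distinct xs \<and> set xs \<subseteq> h ` A}"
proof -
  define R where "R = {xs. length xs = j \<and> distinct xs \<and> set xs \<subseteq> h ` A}"
  have finR: "finite R"
    unfolding R_def
    by (rule finite_subset[OF _ finite_lists_length_eq[of "h ` A" j]]) (use fin in auto)
  have eq: "{ts. length ts = j \<and> set ts \<subseteq> A \<and> distinct (map h ts)} = (\<Union>xs\<in>R. {ts. set ts \<subseteq> A \<and> map h ts = xs})"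
  proof (intro equalityI subsetI)
    fix ts assume "ts \<in> {ts. length ts = j \<and> set ts \<subseteq> A \<and> distinct (map h ts)}"
    then have ts: "length ts = j" "set ts \<subseteq> A" "distinct (map h ts)"
      by auto
    have "map h ts \<in> R"
      unfolding R_def using ts by auto
    moreover have "ts \<in> {ts'. set ts' \<subseteq> A \<and> map h ts' = map h ts}"
      using ts by simp
    ultimately show "ts \<in> (\<Union>xs\<in>R. {ts. set ts \<subseteq> A \<and> map h ts = xs})"
      by blast
  next
    fix ts assume "ts \<in> (\<Union>xs\<in>R. {ts. set ts \<subseteq> A \<and> map h ts = xs})"
    then obtain xs where "xs \<in> R" "set ts \<subseteq> A" "map h ts = xs"
      by blast
    then show "ts \<in> {ts. length ts = j \<and> set ts \<subseteq> A \<and> distinct (map h ts)}"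
      unfolding R_def by (metis (mono_tags, lifting) length_map mem_Collect_eq)
  qed
  have finF: "finite {ts. set ts \<subseteq> A \<and> map h ts = xs}" for xs
    by (rule finite_subset[OF _ finite_lists_length_eq[OF fin, of "length xs"]]) auto
  have "card (\<Union>xs\<in>R. {ts. set ts \<subseteq> A \<and> map h ts = xs}) = (\<Sum>xs\<in>R. card {ts. set ts \<subseteq> A \<and> map h ts = xs})"
    by (rule card_UN_disjoint[OF finR]) (use finF in auto)
  also have "\<dots> = (\<Sum>xs\<in>R. c ^ j)"
    by (intro sum.cong refl) (auto simp: R_def intro!: card_lists_map_eq[OF fin fib])
  finally show ?thesis unfolding eq R_def by simp
qed

section \<open>Strictly balanced graphs\<close>

locale strictly_balanced_graph =
  fixes v :: nat and EH :: "nat set set"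
  assumes graph: "is_graph v EH" and edges_nonempty: "EH \<noteq> {}"
    and strictly_balanced: "strictly_balanced v EH"
begin

lemma edge_is_pair: "\<epsilon> \<in> EH \<Longrightarrow> \<exists>a b. a \<noteq> b \<and> a < v \<and> b < v \<and> \<epsilon> = {a, b}"
  using graph unfolding is_graph_def by blast

lemma edge_subset: "\<epsilon> \<in> EH \<Longrightarrow> \<epsilon> \<subseteq> {0..<v}"
  using edge_is_pair by fastforce

lemma edge_nonempty: "\<epsilon> \<in> EH \<Longrightarrow> \<epsilon> \<noteq> {}"
  using edge_is_pair by fastforce

lemma edges_subset_Pow: "EH \<subseteq> Pow {0..<v}"
  using edge_subset by blast

lemma finite_edges: "finite EH"
  using edges_subset_Pow finite_subset by blast

lemma two_le_order: "v \<ge> 2"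
proof -
  obtain \<epsilon> where "\<epsilon> \<in> EH"
    using edges_nonempty by blast
  then obtain a b where "a \<noteq> b" "a < v" "b < v"
    using edge_is_pair by blast
  then show ?thesis by linarith
qed

lemma card_edges_pos: "card EH > 0"
  using edges_nonempty finite_edges by (simp add: card_gt_0_iff)

lemma whole_in_subgraphs: "({0..<v}, EH) \<in> subgraphs v EH"
  unfolding subgraphs_def using edge_subset by auto

lemma finite_subgraph: "(W, D) \<in> subgraphs v EH \<Longrightarrow> finite W \<and> finite D"
  unfolding subgraphs_def using finite_edges by (auto intro: finite_subset)

lemma finite_subgraphs: "finite (subgraphs v EH)"
proof -
  have "subgraphs v EH \<subseteq> Pow {0..<v} \<times> Pow EH"
    unfolding subgraphs_def by auto
  moreover have "finite (Pow {0..<v} \<times> Pow EH)"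
    using finite_edges by simp
  ultimately show ?thesis by (rule finite_subset)
qed

lemma subgraph_density_less:
  assumes "(W, D) \<in> subgraphs v EH" "W \<noteq> {}" "(W, D) \<noteq> ({0..<v}, EH)"
  shows "real (card D) * real v < real (card EH) * real (card W)"
proof -
  have fin: "finite W" "finite D"
    using finite_subgraph[OF assms(1)] by auto
  have cW: "card W > 0"
    using fin assms(2) by (simp add: card_gt_0_iff)
  show ?thesis
  proof (cases "D = {}")
    case True
    then show ?thesis using cW card_edges_pos by simp
  next
    case False
    then have "real (card D) / real (card W) < real (card EH) / real v"
      using strictly_balanced assms unfolding strictly_balanced_def by blast
    moreover have "real v > 0"
      using two_le_order by simp
    ultimately show ?thesis using cW by (simp add: field_simps)
  qed
qed

lemma subgraph_density_le:
  assumes "(W, D) \<in> subgraphs v EH"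
  shows "real (card D) * real v \<le> real (card EH) * real (card W)"
proof (cases "W = {}")
  case True
  then have "D = {}"
    using assms edge_nonempty unfolding subgraphs_def by fastforce
  then show ?thesis by simp
next
  case False
  show ?thesis
  proof (cases "(W, D) = ({0..<v}, EH)")
    case True
    then show ?thesis by (simp add: mult.commute)
  qed (use subgraph_density_less[OF assms False] in auto)
qed

lemma no_isolated_vertex:
  assumes "a < v"
  shows "\<exists>\<epsilon>\<in>EH. a \<in> \<epsilon>"
proof (rule ccontr)
  assume na: "\<not> ?thesis"
  have "({0..<v} - {a}, EH) \<in> subgraphs v EH"
  proof -
    have "\<forall>\<epsilon>\<in>EH. \<epsilon> \<subseteq> {0..<v} - {a}"
      using edge_subset na by blast
    then show ?thesis unfolding subgraphs_def by auto
  qed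
  moreover have "({0..<v} - {a}, EH) \<noteq> ({0..<v}, EH)"
  proof
    assume "({0..<v} - {a}, EH) = ({0..<v}, EH)"
    then have "{0..<v} - {a} = {0..<v}"
      by simp
    moreover have "a \<in> {0..<v}"
      using assms by simp
    ultimately show False by blast
  qed
  moreover have "{0..<v} - {a} \<noteq> {}"
  proof -
    have "(if a = 0 then 1 else 0) \<in> {0..<v} - {a}"
      using two_le_order assms by auto
    then show ?thesis by blast
  qed
  ultimately have lt: "real (card EH) * real v < real (card EH) * real (card ({0..<v} - {a}))"
    using subgraph_density_less by blast
  have "card ({0..<v} - {a}) = v - 1"
    using assms by simp
  then have "real (card EH) * real v < real (card EH) * real (v - 1)"
    using lt by simp
  moreover have "real (card EH) * real (v - 1) \<le> real (card EH) * real v"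
    by (intro mult_left_mono) auto
  ultimately show False by linarith
qed

lemma max_density_eq: "max_density v EH = real (card EH) / real v"
proof -
  define S where "S = {real (card E) / real (card V) | V E. (V, E) \<in> subgraphs v EH \<and> E \<noteq> {}}"
  have fin: "finite S"
  proof -
    have "S = (\<lambda>(V, E). real (card E) / real (card V)) ` {(V, E) \<in> subgraphs v EH. E \<noteq> {}}"
      unfolding S_def by auto
    moreover have "finite {(V, E). (V, E) \<in> subgraphs v EH \<and> E \<noteq> {}}"
      using finite_subgraphs by (rule finite_subset[rotated]) auto
    ultimately show ?thesis by simp
  qed
  have mem: "real (card EH) / real v \<in> S"
    unfolding S_def using whole_in_subgraphs edges_nonempty by force
  have le: "x \<le> real (card EH) / real v" if xS: "x \<in> S" for x
  proof -
    obtain W D where x: "x = real (card D) / real (card W)" "(W, D) \<in> subgraphs v EH" "D \<noteq> {}"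
      using xS unfolding S_def by blast
    have "W \<noteq> {}"
      using x(2,3) edge_nonempty unfolding subgraphs_def by fastforce
    then have "card W > 0"
      using finite_subgraph[OF x(2)] by (simp add: card_gt_0_iff)
    moreover have "real v > 0"
      using two_le_order by simp
    ultimately show ?thesis using subgraph_density_le[OF x(2)] unfolding x(1) by (simp add: field_simps)
  qed
  have "Max S = real (card EH) / real v"
    by (rule Max_eqI[OF fin le mem])
  then show ?thesis unfolding max_density_def S_def .
qed


text \<open>A copy of \<open>H\<close> is identified with its edge set, which determines it because \<open>H\<close> has no
  isolated vertices.\<close>

definition embeddings :: "nat \<Rightarrow> (nat \<Rightarrow> nat) set" where
  "embeddings m = {f \<in> {0..<v} \<rightarrow>\<^sub>E {0..<m}. inj_on f {0..<v}}"

definition copy_edges :: "(nat \<Rightarrow> nat) \<Rightarrow> nat set set" where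
  "copy_edges f = (\<lambda>\<epsilon>. f ` \<epsilon>) ` EH"

definition copies_in :: "nat \<Rightarrow> nat set set \<Rightarrow> nat set set set" where
  "copies_in m G = copy_edges ` inj_hom v EH m G"

lemma finite_embeddings: "finite (embeddings m)"
proof -
  have "embeddings m \<subseteq> {0..<v} \<rightarrow>\<^sub>E {0..<m}"
    unfolding embeddings_def by auto
  then show ?thesis by (rule finite_subset) (simp add: finite_PiE)
qed

lemma inj_hom_eq_embeddings: "inj_hom v EH m G = {f \<in> embeddings m. copy_edges f \<subseteq> G}"
  unfolding inj_hom_def embeddings_def copy_edges_def by auto

lemma inj_on_image_edges: "f \<in> embeddings m \<Longrightarrow> inj_on (\<lambda>\<epsilon>. f ` \<epsilon>) EH"
proof (rule inj_onI)
  fix a b assume f: "f \<in> embeddings m" and ab: "a \<in> EH" "b \<in> EH" "f ` a = f ` b"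
  have "inj_on f {0..<v}"
    using f unfolding embeddings_def by auto
  then show "a = b"
    using ab edge_subset[OF ab(1)] edge_subset[OF ab(2)] inj_on_image_eq_iff by metis
qed

lemma card_copy_edges: "f \<in> embeddings m \<Longrightarrow> card (copy_edges f) = card EH"
  unfolding copy_edges_def using inj_on_image_edges by (simp add: card_image)

lemma finite_copy_edges: "finite (copy_edges f)"
  unfolding copy_edges_def using finite_edges by simp

lemma Union_copy_edges: "\<Union>(copy_edges f) = f ` {0..<v}"
proof
  show "\<Union>(copy_edges f) \<subseteq> f ` {0..<v}"
    unfolding copy_edges_def using edge_subset by auto
  show "f ` {0..<v} \<subseteq> \<Union>(copy_edges f)"
  proof
    fix y
    assume "y \<in> f ` {0..<v}"
    then obtain a where a: "a < v" "y = f a"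
      by auto
    obtain \<epsilon> where "\<epsilon> \<in> EH" "a \<in> \<epsilon>"
      using no_isolated_vertex[OF a(1)] by blast
    then show "y \<in> \<Union>(copy_edges f)"
      unfolding copy_edges_def using a by auto
  qed
qed

lemma finite_Aut: "finite (Aut v EH)"
proof -
  have "Aut v EH \<subseteq> {0..<v} \<rightarrow>\<^sub>E {0..<v}"
    unfolding Aut_def by auto
  then show ?thesis
    by (rule finite_subset) (simp add: finite_PiE)
qed

lemma card_Aut_pos: "card (Aut v EH) > 0"
proof -
  have "restrict id {0..<v} ` \<epsilon> = \<epsilon>" if "\<epsilon> \<in> EH" for \<epsilon>
    using edge_subset[OF that] by auto
  then have "(\<lambda>\<epsilon>. restrict id {0..<v} ` \<epsilon>) ` EH = EH"
    by simp
  moreover have "bij_betw (restrict id {0..<v}) {0..<v} {0..<v}"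
    by (simp add: bij_betw_def inj_on_def)
  ultimately have "restrict id {0..<v} \<in> Aut v EH"
    unfolding Aut_def by auto
  then show ?thesis
    using finite_Aut by (auto simp: card_gt_0_iff)
qed

lemma embedding_comp_Aut:
  assumes f0: "f0 \<in> embeddings m" and \<sigma>: "\<sigma> \<in> Aut v EH"
  shows "restrict (f0 \<circ> \<sigma>) {0..<v} \<in> embeddings m"
    and "copy_edges (restrict (f0 \<circ> \<sigma>) {0..<v}) = copy_edges f0"
proof -
  have \<sigma>V: "\<sigma> \<in> {0..<v} \<rightarrow>\<^sub>E {0..<v}" "bij_betw \<sigma> {0..<v} {0..<v}" "(\<lambda>e. \<sigma> ` e) ` EH = EH"
    using \<sigma> unfolding Aut_def by auto
  have "inj_on (f0 \<circ> \<sigma>) {0..<v}"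
    using \<sigma>V(2) f0 by (simp add: embeddings_def bij_betw_def comp_inj_on)
  moreover have "f0 (\<sigma> a) < m" if "a < v" for a
    using \<sigma>V(1) f0 that unfolding embeddings_def by (auto dest!: PiE_mem)
  ultimately show "restrict (f0 \<circ> \<sigma>) {0..<v} \<in> embeddings m"
    unfolding embeddings_def by (simp add: restrict_PiE_iff)
  have "restrict (f0 \<circ> \<sigma>) {0..<v} ` \<epsilon> = f0 ` (\<sigma> ` \<epsilon>)" if "\<epsilon> \<in> EH" for \<epsilon>
    using edge_subset[OF that] by (simp add: image_comp subset_eq)
  then have "copy_edges (restrict (f0 \<circ> \<sigma>) {0..<v}) = (\<lambda>\<epsilon>. f0 ` \<epsilon>) ` ((\<lambda>e. \<sigma> ` e) ` EH)"
    unfolding copy_edges_def by (auto simp: image_image)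
  then show "copy_edges (restrict (f0 \<circ> \<sigma>) {0..<v}) = copy_edges f0"
    using \<sigma>V(3) unfolding copy_edges_def by simp
qed

lemma bij_betw_inv_into_comp:
  assumes "inj_on f V" and "inj_on g V" and "f ` V = g ` V"
  shows "bij_betw (\<lambda>a. inv_into V g (f a)) V V"
proof -
  have "bij_betw f V (g ` V)"
    using assms by (simp add: bij_betw_def)
  moreover have "bij_betw (inv_into V g) (g ` V) V"
    using assms(2) by (rule bij_betw_inv_into[OF inj_on_imp_bij_betw])
  ultimately show ?thesis
    using bij_betw_trans by (auto simp: comp_def)
qed

lemma same_copy_imp_Aut:
  assumes f0: "f0 \<in> embeddings m" and f: "f \<in> embeddings m" and same: "copy_edges f = copy_edges f0"
  obtains \<sigma> where "\<sigma> \<in> Aut v EH" and "f = restrict (f0 \<circ> \<sigma>) {0..<v}"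
proof -
  define \<sigma> where "\<sigma> = restrict (\<lambda>a. inv_into {0..<v} f0 (f a)) {0..<v}"
  have inj: "inj_on f0 {0..<v}" "inj_on f {0..<v}"
    using f0 f unfolding embeddings_def by auto
  have image: "f ` {0..<v} = f0 ` {0..<v}"
    using Union_copy_edges[of f] Union_copy_edges[of f0] same by simp
  have bij: "bij_betw \<sigma> {0..<v} {0..<v}"
    unfolding \<sigma>_def bij_betw_restrict_eq by (rule bij_betw_inv_into_comp[OF inj(2,1) image])
  have edge: "\<sigma> ` \<epsilon> \<in> EH" if "\<epsilon> \<in> EH" for \<epsilon>
  proof -
    have "f ` \<epsilon> \<in> copy_edges f0"
      using that by (subst same[symmetric]) (simp add: copy_edges_def)
    then obtain \<epsilon>' where \<epsilon>': "\<epsilon>' \<in> EH" "f ` \<epsilon> = f0 ` \<epsilon>'"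
      unfolding copy_edges_def by blast
    have "\<sigma> ` \<epsilon> = inv_into {0..<v} f0 ` f ` \<epsilon>"
      using edge_subset[OF that] unfolding \<sigma>_def by (auto simp: image_image)
    also have "\<dots> = inv_into {0..<v} f0 ` f0 ` \<epsilon>'"
      by (simp only: \<epsilon>'(2))
    also have "\<dots> = \<epsilon>'"
      using inj(1) edge_subset[OF \<epsilon>'(1)] by (rule inv_into_image_cancel)
    finally show ?thesis
      using \<epsilon>'(1) by simp
  qed
  have "inj_on (\<lambda>e. \<sigma> ` e) EH"
    using bij edge_subset unfolding bij_betw_def by (metis inj_onI inj_on_image_eq_iff)
  then have "(\<lambda>e. \<sigma> ` e) ` EH = EH"
    using edge by (intro endo_inj_surj[OF finite_edges]) auto
  then have "\<sigma> \<in> Aut v EH"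
    using bij unfolding Aut_def \<sigma>_def by (auto simp: bij_betw_def)
  moreover have "f = restrict (f0 \<circ> \<sigma>) {0..<v}"
  proof (rule extensionalityI)
    show "f \<in> extensional {0..<v}"
      using f unfolding embeddings_def by (auto simp: PiE_def)
    fix a
    assume "a \<in> {0..<v}"
    moreover from this have "f a \<in> f0 ` {0..<v}"
      using image by blast
    ultimately show "f a = restrict (f0 \<circ> \<sigma>) {0..<v} a"
      by (simp add: \<sigma>_def f_inv_into_f)
  qed simp
  ultimately show ?thesis
    using that by blast
qed

lemma card_embeddings_same_copy:
  assumes f0: "f0 \<in> embeddings m"
  shows "card {f \<in> embeddings m. copy_edges f = copy_edges f0} = card (Aut v EH)"
proof -
  have "bij_betw (\<lambda>\<sigma>. restrict (f0 \<circ> \<sigma>) {0..<v}) (Aut v EH) {f \<in> embeddings m. copy_edges f = copy_edges f0}"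
  proof (rule bij_betw_imageI)
    show "inj_on (\<lambda>\<sigma>. restrict (f0 \<circ> \<sigma>) {0..<v}) (Aut v EH)"
    proof (rule inj_onI)
      fix \<sigma>1 \<sigma>2
      assume \<sigma>: "\<sigma>1 \<in> Aut v EH" "\<sigma>2 \<in> Aut v EH" and eq: "restrict (f0 \<circ> \<sigma>1) {0..<v} = restrict (f0 \<circ> \<sigma>2) {0..<v}"
      have \<sigma>V: "\<sigma>1 \<in> {0..<v} \<rightarrow>\<^sub>E {0..<v}" "\<sigma>2 \<in> {0..<v} \<rightarrow>\<^sub>E {0..<v}"
        using \<sigma> unfolding Aut_def by auto
      show "\<sigma>1 = \<sigma>2"
      proof (rule extensionalityI[of _ "{0..<v}"])
        fix a
        assume "a \<in> {0..<v}"
        then have "f0 (\<sigma>1 a) = f0 (\<sigma>2 a)" and "\<sigma>1 a \<in> {0..<v}" and "\<sigma>2 a \<in> {0..<v}"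
          using fun_cong[OF eq, of a] \<sigma>V by auto
        then show "\<sigma>1 a = \<sigma>2 a"
          using f0 unfolding embeddings_def by (auto dest: inj_onD)
      qed (use \<sigma>V in \<open>auto simp: PiE_def\<close>)
    qed
    show "(\<lambda>\<sigma>. restrict (f0 \<circ> \<sigma>) {0..<v}) ` Aut v EH = {f \<in> embeddings m. copy_edges f = copy_edges f0}"
      using embedding_comp_Aut[OF f0] same_copy_imp_Aut[OF f0] by blast
  qed
  then show ?thesis
    by (rule bij_betw_same_card[symmetric])
qed

lemma card_inj_hom: "card (inj_hom v EH m G) = card (Aut v EH) * card (copies_in m G)"
proof -
  have "inj_hom v EH m G = (\<Union>S\<in>copies_in m G. {f \<in> embeddings m. copy_edges f = S})"
    unfolding inj_hom_eq_embeddings copies_in_def by auto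
  moreover have "card (\<Union>S\<in>copies_in m G. {f \<in> embeddings m. copy_edges f = S}) =
      (\<Sum>S\<in>copies_in m G. card {f \<in> embeddings m. copy_edges f = S})"
    using finite_embeddings unfolding copies_in_def inj_hom_eq_embeddings by (intro card_UN_disjoint) auto
  moreover have "card {f \<in> embeddings m. copy_edges f = S} = card (Aut v EH)" if "S \<in> copies_in m G" for S
    using that card_embeddings_same_copy unfolding copies_in_def inj_hom_eq_embeddings by auto
  ultimately show ?thesis
    by simp
qed

lemma copies_eq_card: "copies v EH m G = real (card (copies_in m G))"
  using card_Aut_pos unfolding copies_def card_inj_hom by simp


subsection \<open>Binomial moments of the number of copies\<close>

text \<open>The edge probability \<open>(c / m) powr (1 / k(H))\<close> of the theorem, with \<open>k(H) = e / v\<close>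
  by \<open>max_density_eq\<close>.\<close>

definition edge_prob :: "real \<Rightarrow> nat \<Rightarrow> real" where
  "edge_prob c m = (c / real m) powr (real v / real (card EH))"

lemma edge_prob_nonneg [simp]: "0 \<le> edge_prob c m"
  by (simp add: edge_prob_def)

definition tuple_edges :: "(nat \<Rightarrow> nat) list \<Rightarrow> nat set set" where
  "tuple_edges ts = \<Union>(copy_edges ` set ts)"

definition copy_tuples :: "nat \<Rightarrow> nat \<Rightarrow> (nat \<Rightarrow> nat) list set" where
  "copy_tuples m j = {ts. length ts = j \<and> set ts \<subseteq> embeddings m \<and> distinct (map copy_edges ts)}"

lemma finite_copy_tuples: "finite (copy_tuples m j)"
  unfolding copy_tuples_def
  by (rule finite_subset[OF _ finite_lists_length_eq[OF finite_embeddings, of m j]]) auto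

lemma copy_edges_subset_all_edges: "f \<in> embeddings m \<Longrightarrow> copy_edges f \<subseteq> all_edges m"
proof
  fix x assume f: "f \<in> embeddings m" and x: "x \<in> copy_edges f"
  then obtain \<epsilon> where e: "\<epsilon> \<in> EH" "x = f ` \<epsilon>"
    unfolding copy_edges_def by auto
  obtain a b where ab: "a \<noteq> b" "a < v" "b < v" "\<epsilon> = {a, b}"
    using edge_is_pair[OF e(1)] by blast
  have fI: "f \<in> {0..<v} \<rightarrow>\<^sub>E {0..<m}" "inj_on f {0..<v}"
    using f unfolding embeddings_def by auto
  have fab: "f a \<noteq> f b" "f a < m" "f b < m"
  proof -
    show "f a < m"
      using PiE_mem[OF fI(1), of a] ab by simp
    show "f b < m"
      using PiE_mem[OF fI(1), of b] ab by simp
    show "f a \<noteq> f b"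
      using inj_onD[OF fI(2), of a b] ab by auto
  qed
  show "x \<in> all_edges m"
    unfolding all_edges_def e(2) ab(4) using fab by auto
qed

lemma tuple_edges_subset_all_edges: "set ts \<subseteq> embeddings m \<Longrightarrow> tuple_edges ts \<subseteq> all_edges m"
  unfolding tuple_edges_def using copy_edges_subset_all_edges by blast

lemma card_copy_tuples_in:
  "(card (copies_in m G) choose j) * fact j * card (Aut v EH) ^ j = card {ts \<in> copy_tuples m j. tuple_edges ts \<subseteq> G}"
proof -
  have eq: "{ts \<in> copy_tuples m j. tuple_edges ts \<subseteq> G} = {ts. length ts = j \<and> set ts \<subseteq> inj_hom v EH m G \<and> distinct (map copy_edges ts)}"
    unfolding copy_tuples_def tuple_edges_def inj_hom_eq_embeddings by auto
  have finA: "finite (inj_hom v EH m G)"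
    unfolding inj_hom_eq_embeddings using finite_embeddings by simp
  have fib: "card {x \<in> inj_hom v EH m G. copy_edges x = y} = card (Aut v EH)" if yA: "y \<in> copy_edges ` inj_hom v EH m G" for y
  proof -
    obtain f0 where f0: "f0 \<in> inj_hom v EH m G" "y = copy_edges f0"
      using yA by auto
    have "{x \<in> inj_hom v EH m G. copy_edges x = y} = {f \<in> embeddings m. copy_edges f = copy_edges f0}"
      using f0 unfolding inj_hom_eq_embeddings by auto
    then show ?thesis using card_embeddings_same_copy f0 unfolding inj_hom_eq_embeddings by simp
  qed
  have "card {ts \<in> copy_tuples m j. tuple_edges ts \<subseteq> G} = card (Aut v EH) ^ j * card {xs. length xs = j \<and> distinct xs \<and> set xs \<subseteq> copies_in m G}"
    unfolding eq copies_in_def by (rule card_lists_distinct_map[OF finA fib])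
  also have "\<dots> = card (Aut v EH) ^ j * ((card (copies_in m G) choose j) * fact j)"
  proof -
    have "finite (copies_in m G)"
      unfolding copies_in_def using finA by simp
    then show ?thesis by (simp add: card_distinct_lists)
  qed
  finally show ?thesis by (simp add: mult.commute)
qed

lemma expectation_choose_copies:
  assumes p: "0 \<le> p" "p \<le> 1"
  shows "measure_pmf.expectation (gnp m p) (\<lambda>G. real (card (copies_in m G) choose j)) =
         (\<Sum>ts\<in>copy_tuples m j. p ^ card (tuple_edges ts)) / (real (card (Aut v EH)) ^ j * fact j)"
proof -
  define a where "a = real (card (Aut v EH)) ^ j * fact j"
  have a: "a > 0"
    unfolding a_def using card_Aut_pos by simp
  have pt: "real (card (copies_in m G) choose j) = (\<Sum>ts\<in>copy_tuples m j. indicator {G. tuple_edges ts \<subseteq> G} G) / a" for G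
  proof -
    have "real (card {ts \<in> copy_tuples m j. tuple_edges ts \<subseteq> G}) = (\<Sum>ts\<in>copy_tuples m j. indicator {G. tuple_edges ts \<subseteq> G} G)"
      using finite_copy_tuples by (simp add: indicator_def sum.If_cases Int_def)
    moreover have "real (card {ts \<in> copy_tuples m j. tuple_edges ts \<subseteq> G}) = real (card (copies_in m G) choose j) * a"
      unfolding a_def card_copy_tuples_in[symmetric] by (simp add: algebra_simps)
    ultimately show ?thesis using a by (simp add: field_simps)
  qed
  have int: "integrable (measure_pmf (gnp m p)) f" for f :: "nat set set \<Rightarrow> real"
    by (rule integrable_measure_pmf_finite[OF finite_set_pmf_gnp])
  have "measure_pmf.expectation (gnp m p) (\<lambda>G. real (card (copies_in m G) choose j)) =
        measure_pmf.expectation (gnp m p) (\<lambda>G. (\<Sum>ts\<in>copy_tuples m j. indicator {G. tuple_edges ts \<subseteq> G} G)) / a"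
    unfolding pt by simp
  also have "measure_pmf.expectation (gnp m p) (\<lambda>G. (\<Sum>ts\<in>copy_tuples m j. indicator {G. tuple_edges ts \<subseteq> G} G :: real)) =
        (\<Sum>ts\<in>copy_tuples m j. measure_pmf.prob (gnp m p) {G. tuple_edges ts \<subseteq> G})"
    by (subst Bochner_Integration.integral_sum) (auto intro: int)
  also have "\<dots> = (\<Sum>ts\<in>copy_tuples m j. p ^ card (tuple_edges ts))"
    by (intro sum.cong refl prob_gnp_supset p tuple_edges_subset_all_edges) (auto simp: copy_tuples_def)
  finally show ?thesis unfolding a_def .
qed


definition tuple_vertices :: "(nat \<Rightarrow> nat) list \<Rightarrow> nat set" where
  "tuple_vertices ts = \<Union>((\<lambda>g. g ` {0..<v}) ` set ts)"

fun vertex_disjoint :: "(nat \<Rightarrow> nat) list \<Rightarrow> bool" where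
  "vertex_disjoint [] = True"
| "vertex_disjoint (f # ts) = (f ` {0..<v} \<inter> tuple_vertices ts = {} \<and> vertex_disjoint ts)"

lemma tuple_edges_Cons: "tuple_edges (f # ts) = copy_edges f \<union> tuple_edges ts"
  unfolding tuple_edges_def by simp

lemma tuple_vertices_Cons: "tuple_vertices (f # ts) = f ` {0..<v} \<union> tuple_vertices ts"
  unfolding tuple_vertices_def by simp

lemma tuple_edges_Nil: "tuple_edges [] = {}" and tuple_vertices_Nil: "tuple_vertices [] = {}"
  unfolding tuple_edges_def tuple_vertices_def by simp_all

lemma copy_edge_subset_image: "x \<in> copy_edges g \<Longrightarrow> x \<subseteq> g ` {0..<v}"
  unfolding copy_edges_def using edge_subset by auto

lemma copy_edge_nonempty: "x \<in> copy_edges g \<Longrightarrow> x \<noteq> {}"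
  unfolding copy_edges_def using edge_nonempty by auto

lemma tuple_edge_subset_vertices: "x \<in> tuple_edges ts \<Longrightarrow> x \<subseteq> tuple_vertices ts"
  unfolding tuple_edges_def tuple_vertices_def using copy_edge_subset_image by blast

lemma finite_tuple_edges: "finite (tuple_edges ts)"
  unfolding tuple_edges_def using finite_copy_edges by auto

lemma finite_tuple_vertices: "finite (tuple_vertices ts)"
  unfolding tuple_vertices_def by auto

lemma embeddings_range: "f \<in> embeddings m \<Longrightarrow> a < v \<Longrightarrow> f a < m"
  unfolding embeddings_def by (auto dest: PiE_mem)

lemma embeddings_inj: "f \<in> embeddings m \<Longrightarrow> inj_on f {0..<v}"
  unfolding embeddings_def by auto

lemma card_image_embedding: "f \<in> embeddings m \<Longrightarrow> card (f ` {0..<v}) = v"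
  using embeddings_inj by (simp add: card_image)

lemma tuple_vertices_subset: "set ts \<subseteq> embeddings m \<Longrightarrow> tuple_vertices ts \<subseteq> {0..<m}"
  unfolding tuple_vertices_def using embeddings_range by fastforce

lemma vertex_disjoint_card:
  "vertex_disjoint ts \<Longrightarrow> set ts \<subseteq> embeddings m \<Longrightarrow>
    card (tuple_edges ts) = length ts * card EH \<and> card (tuple_vertices ts) = length ts * v"
proof (induction ts)
  case Nil
  then show ?case by (simp add: tuple_edges_Nil tuple_vertices_Nil)
next
  case (Cons f ts)
  have f: "f \<in> embeddings m" and ts: "set ts \<subseteq> embeddings m"
    using Cons.prems by auto
  have d: "f ` {0..<v} \<inter> tuple_vertices ts = {}" and pd: "vertex_disjoint ts"
    using Cons.prems by auto
  have IH: "card (tuple_edges ts) = length ts * card EH" "card (tuple_vertices ts) = length ts * v"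
    using Cons.IH[OF pd ts] by auto
  have dE: "copy_edges f \<inter> tuple_edges ts = {}"
  proof (rule ccontr)
    assume "copy_edges f \<inter> tuple_edges ts \<noteq> {}"
    then obtain x where x: "x \<in> copy_edges f" "x \<in> tuple_edges ts"
      by blast
    have "x \<subseteq> f ` {0..<v}" "x \<subseteq> tuple_vertices ts" "x \<noteq> {}"
      using copy_edge_subset_image[OF x(1)] tuple_edge_subset_vertices[OF x(2)] copy_edge_nonempty[OF x(1)] by auto
    then show False using d by blast
  qed
  have "card (tuple_edges (f # ts)) = card (copy_edges f) + card (tuple_edges ts)"
    unfolding tuple_edges_Cons by (rule card_Un_disjoint[OF finite_copy_edges finite_tuple_edges dE])
  moreover have "card (tuple_vertices (f # ts)) = card (f ` {0..<v}) + card (tuple_vertices ts)"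
    unfolding tuple_vertices_Cons by (rule card_Un_disjoint[OF _ finite_tuple_vertices d]) simp
  ultimately show ?case using IH card_copy_edges[OF f] card_image_embedding[OF f] by simp
qed

lemma copy_tuples_Suc:
  "copy_tuples m (Suc j) = (\<lambda>(ts, f). f # ts) `
     (SIGMA ts:copy_tuples m j. {f \<in> embeddings m. copy_edges f \<notin> copy_edges ` set ts})"
proof (intro equalityI subsetI)
  fix x assume "x \<in> copy_tuples m (Suc j)"
  then obtain f ts where x: "x = f # ts" and "length ts = j" "f \<in> embeddings m" "set ts \<subseteq> embeddings m"
      "copy_edges f \<notin> set (map copy_edges ts)" "distinct (map copy_edges ts)"
    unfolding copy_tuples_def by (cases x) auto
  then show "x \<in> (\<lambda>(ts, f). f # ts) ` (SIGMA ts:copy_tuples m j. {f \<in> embeddings m. copy_edges f \<notin> copy_edges ` set ts})"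
    unfolding copy_tuples_def by auto
qed (auto simp: copy_tuples_def)

lemma sum_copy_tuples_Suc:
  "(\<Sum>ts'\<in>copy_tuples m (Suc j). F ts') =
     (\<Sum>ts\<in>copy_tuples m j. \<Sum>f\<in>{f \<in> embeddings m. copy_edges f \<notin> copy_edges ` set ts}. F (f # ts))"
proof -
  have inj: "inj_on (\<lambda>(ts, f). f # ts) X" for X :: "((nat \<Rightarrow> nat) list \<times> (nat \<Rightarrow> nat)) set"
    by (auto simp: inj_on_def)
  have "(\<Sum>ts'\<in>copy_tuples m (Suc j). F ts') = (\<Sum>x\<in>(SIGMA ts:copy_tuples m j. {f \<in> embeddings m. copy_edges f \<notin> copy_edges ` set ts}). F ((\<lambda>(ts, f). f # ts) x))"
    unfolding copy_tuples_Suc using sum.reindex[OF inj, of F] by (simp add: comp_def)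
  also have "\<dots> = (\<Sum>ts\<in>copy_tuples m j. \<Sum>f\<in>{f \<in> embeddings m. copy_edges f \<notin> copy_edges ` set ts}. F (f # ts))"
  proof -
    have "(\<Sum>ts\<in>copy_tuples m j. \<Sum>f\<in>{f \<in> embeddings m. copy_edges f \<notin> copy_edges ` set ts}. F (f # ts)) =
          (\<Sum>(ts, f)\<in>(SIGMA ts:copy_tuples m j. {f \<in> embeddings m. copy_edges f \<notin> copy_edges ` set ts}). F (f # ts))"
      by (rule sum.Sigma) (auto simp: finite_copy_tuples finite_embeddings)
    then show ?thesis by (simp add: case_prod_unfold)
  qed
  finally show ?thesis .
qed

definition disjoint_weight :: "nat \<Rightarrow> real \<Rightarrow> nat \<Rightarrow> real" where
  "disjoint_weight m p j = (\<Sum>ts\<in>copy_tuples m j. if vertex_disjoint ts then p ^ card (tuple_edges ts) else 0)"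

definition overlap_weight :: "nat \<Rightarrow> real \<Rightarrow> nat \<Rightarrow> real" where
  "overlap_weight m p j = (\<Sum>ts\<in>copy_tuples m j. if vertex_disjoint ts then 0 else p ^ card (tuple_edges ts))"

lemma sum_copy_tuples_split: "(\<Sum>ts\<in>copy_tuples m j. p ^ card (tuple_edges ts)) = disjoint_weight m p j + overlap_weight m p j"
  unfolding disjoint_weight_def overlap_weight_def by (simp add: sum.distrib[symmetric] if_distrib if_distribR cong: if_cong)

lemma disjoint_copy_new:
  assumes "f ` {0..<v} \<inter> tuple_vertices ts = {}"
  shows "copy_edges f \<notin> copy_edges ` set ts"
proof
  assume "copy_edges f \<in> copy_edges ` set ts"
  then obtain g where g: "g \<in> set ts" "copy_edges f = copy_edges g"
    by auto
  have "f ` {0..<v} = g ` {0..<v}"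
    using Union_copy_edges[of f] Union_copy_edges[of g] g(2) by simp
  moreover have "g ` {0..<v} \<subseteq> tuple_vertices ts"
    using g(1) unfolding tuple_vertices_def by auto
  moreover have "f ` {0..<v} \<noteq> {}"
    using two_le_order by auto
  ultimately show False using assms by blast
qed

lemma card_embeddings_avoiding:
  assumes "W \<subseteq> {0..<m}"
  shows "card {f \<in> embeddings m. f ` {0..<v} \<inter> W = {}} = (\<Prod>i<v. m - card W - i)"
proof -
  have "{f \<in> embeddings m. f ` {0..<v} \<inter> W = {}} = {f \<in> {0..<v} \<rightarrow>\<^sub>E ({0..<m} - W). inj_on f {0..<v}}"
    unfolding embeddings_def by (auto simp: PiE_iff)
  moreover have "card ({0..<m} - W) = m - card W"
    using assms by (simp add: card_Diff_subset finite_subset)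
  moreover have "card {f \<in> {0..<v} \<rightarrow>\<^sub>E ({0..<m} - W). inj_on f {0..<v}} =
      card ({0..<m} - W) ^ (card {0..<v} - card {0..<v}) * prod ((-) (card ({0..<m} - W))) {0..<card {0..<v}}"
    by (rule card_inj_on_subset_funcset) auto
  ultimately show ?thesis
    by (simp add: atLeast0LessThan)
qed

lemma sum_disjoint_extensions:
  assumes ts: "ts \<in> copy_tuples m j" and disjoint: "vertex_disjoint ts"
  shows "(\<Sum>f\<in>{f \<in> embeddings m. copy_edges f \<notin> copy_edges ` set ts}.
            if vertex_disjoint (f # ts) then p ^ card (tuple_edges (f # ts)) else 0)
         = real (\<Prod>i<v. m - j * v - i) * p ^ (Suc j * card EH)"
proof -
  define A where "A = {f \<in> embeddings m. f ` {0..<v} \<inter> tuple_vertices ts = {}}"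
  have ts_emb: "set ts \<subseteq> embeddings m" and "length ts = j"
    using ts unfolding copy_tuples_def by auto
  have card_extension: "card (tuple_edges (f # ts)) = Suc j * card EH" if "f \<in> A" for f
    using vertex_disjoint_card[of "f # ts" m] that disjoint ts_emb \<open>length ts = j\<close> unfolding A_def by simp
  have "(\<Sum>f\<in>{f \<in> embeddings m. copy_edges f \<notin> copy_edges ` set ts}.
      if vertex_disjoint (f # ts) then p ^ card (tuple_edges (f # ts)) else 0) = (\<Sum>f\<in>A. p ^ (Suc j * card EH))"
  proof (rule sum.mono_neutral_cong_right)
    show "A \<subseteq> {f \<in> embeddings m. copy_edges f \<notin> copy_edges ` set ts}"
      unfolding A_def using disjoint_copy_new by blast
  qed (use finite_embeddings disjoint card_extension in \<open>auto simp: A_def\<close>)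
  also have "\<dots> = real (card A) * p ^ (Suc j * card EH)"
    by simp
  also have "card A = (\<Prod>i<v. m - j * v - i)"
    using card_embeddings_avoiding[OF tuple_vertices_subset[OF ts_emb]] vertex_disjoint_card[OF disjoint ts_emb]
      \<open>length ts = j\<close> unfolding A_def by simp
  finally show ?thesis
    by simp
qed

lemma disjoint_weight_Suc:
  "disjoint_weight m p (Suc j) = disjoint_weight m p j * real (\<Prod>i<v. m - j * v - i) * p ^ card EH"
proof -
  have "disjoint_weight m p (Suc j) = (\<Sum>ts\<in>copy_tuples m j. \<Sum>f\<in>{f \<in> embeddings m. copy_edges f \<notin> copy_edges ` set ts}.
            if vertex_disjoint (f # ts) then p ^ card (tuple_edges (f # ts)) else 0)"
    unfolding disjoint_weight_def by (rule sum_copy_tuples_Suc)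
  also have "\<dots> = (\<Sum>ts\<in>copy_tuples m j. if vertex_disjoint ts then real (\<Prod>i<v. m - j * v - i) * p ^ (Suc j * card EH) else 0)"
  proof (rule sum.cong[OF refl])
    fix ts
    assume "ts \<in> copy_tuples m j"
    then show "(\<Sum>f\<in>{f \<in> embeddings m. copy_edges f \<notin> copy_edges ` set ts}.
          if vertex_disjoint (f # ts) then p ^ card (tuple_edges (f # ts)) else 0) =
        (if vertex_disjoint ts then real (\<Prod>i<v. m - j * v - i) * p ^ (Suc j * card EH) else 0)"
      using sum_disjoint_extensions[of ts m j p] by (cases "vertex_disjoint ts") simp_all
  qed
  also have "\<dots> = disjoint_weight m p j * real (\<Prod>i<v. m - j * v - i) * p ^ card EH"
    unfolding disjoint_weight_def sum_distrib_right
    by (intro sum.cong refl) (auto simp: copy_tuples_def vertex_disjoint_card power_add mult_ac)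
  finally show ?thesis .
qed

lemma disjoint_weight_0: "disjoint_weight m p 0 = 1"
proof -
  have "copy_tuples m 0 = {[]}"
    unfolding copy_tuples_def by auto
  then show ?thesis unfolding disjoint_weight_def by (simp add: tuple_edges_Nil)
qed


lemma edge_prob_power:
  assumes "m > 0" "c > 0"
  shows "(edge_prob c m) ^ card EH = (c / real m) ^ v"
proof -
  have cm: "c / real m > 0"
    using assms by simp
  have "(edge_prob c m) ^ card EH = (c / real m) powr (real (card EH) * (real v / real (card EH)))"
    unfolding edge_prob_def by (rule powr_power) (use assms in simp)
  also have "real (card EH) * (real v / real (card EH)) = real v"
    using card_edges_pos by simp
  also have "(c / real m) powr real v = (c / real m) ^ v"
    using cm by (rule powr_realpow)
  finally show ?thesis .
qed

lemma extension_factor_tendsto: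
  assumes c: "c > 0"
  shows "(\<lambda>m. real (\<Prod>i<v. m - j * v - i) * (edge_prob c m) ^ card EH) \<longlonglongrightarrow> c ^ v"
proof -
  have ev: "eventually (\<lambda>m. real (\<Prod>i<v. m - j * v - i) * (edge_prob c m) ^ card EH =
        c ^ v * (\<Prod>i<v. (real m - real (j * v + i)) / real m)) sequentially"
    using eventually_ge_at_top[of "j * v + v + 1"]
  proof eventually_elim
    case (elim m)
    then have m: "m > 0"
      by simp
    have "real (\<Prod>i<v. m - j * v - i) = (\<Prod>i<v. real m - real (j * v + i))"
      unfolding of_nat_prod
    proof (rule prod.cong[OF refl])
      fix i assume "i \<in> {..<v}"
      then have "j * v + i \<le> m"
        using elim by simp
      then show "real (m - j * v - i) = real m - real (j * v + i)"
        by (simp add: of_nat_diff)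
    qed
    moreover have "(\<Prod>i<v. (real m - real (j * v + i)) / real m) = (\<Prod>i<v. real m - real (j * v + i)) / real m ^ v"
      by (simp add: prod_dividef)
    ultimately show ?case using edge_prob_power[OF m c]
      by (simp add: power_divide)
  qed
  have "(\<lambda>m. c ^ v * (\<Prod>i<v. (real m - real (j * v + i)) / real m)) \<longlonglongrightarrow> c ^ v * (\<Prod>i<v. 1)"
    by (intro tendsto_mult tendsto_const tendsto_prod) real_asymp
  then have "(\<lambda>m. c ^ v * (\<Prod>i<v. (real m - real (j * v + i)) / real m)) \<longlonglongrightarrow> c ^ v"
    by simp
  then show ?thesis using tendsto_cong[OF ev] by simp
qed

lemma disjoint_weight_tendsto:
  assumes c: "c > 0"
  shows "(\<lambda>m. disjoint_weight m (edge_prob c m) j) \<longlonglongrightarrow> c ^ (v * j)"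
proof (induction j)
  case 0
  then show ?case by (simp add: disjoint_weight_0)
next
  case (Suc j)
  have eq: "disjoint_weight m (edge_prob c m) (Suc j) =
      disjoint_weight m (edge_prob c m) j *
      (real (\<Prod>i<v. m - j * v - i) * (edge_prob c m) ^ card EH)" for m
    by (subst disjoint_weight_Suc) (simp_all add: mult_ac)
  have "(\<lambda>m. disjoint_weight m (edge_prob c m) j *
      (real (\<Prod>i<v. m - j * v - i) * (edge_prob c m) ^ card EH)) \<longlonglongrightarrow> c ^ (v * j) * c ^ v"
    by (intro tendsto_mult Suc extension_factor_tendsto c)
  then show ?case unfolding eq by (simp add: power_add mult_ac)
qed


lemma vertex_disjoint_pairwise:
  "vertex_disjoint ts \<Longrightarrow> g \<in> set ts \<Longrightarrow> g' \<in> set ts \<Longrightarrow> g \<noteq> g' \<Longrightarrow>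
    g ` {0..<v} \<inter> g' ` {0..<v} = {}"
proof (induction ts)
  case Nil
  then show ?case by simp
next
  case (Cons h ts)
  have d: "h ` {0..<v} \<inter> tuple_vertices ts = {}" and pd: "vertex_disjoint ts"
    using Cons.prems by auto
  have sub: "x \<in> set ts \<Longrightarrow> x ` {0..<v} \<subseteq> tuple_vertices ts" for x unfolding tuple_vertices_def by auto
  consider "g = h" "g' \<in> set ts" | "g' = h" "g \<in> set ts" | "g \<in> set ts" "g' \<in> set ts"
    using Cons.prems by auto
  then show ?case
  proof cases
    case 1 then show ?thesis using d sub by blast
  next
    case 2 then show ?thesis using d sub by blast
  next
    case 3 then show ?thesis using Cons.IH[OF pd] Cons.prems by blast
  qed
qed

subsection \<open>Overlapping tuples of copies\<close>

definition shared_vertices :: "(nat \<Rightarrow> nat) list \<Rightarrow> (nat \<Rightarrow> nat) \<Rightarrow> nat set" where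
  "shared_vertices ts f = {a \<in> {0..<v}. f a \<in> tuple_vertices ts}"

definition shared_edges :: "(nat \<Rightarrow> nat) list \<Rightarrow> (nat \<Rightarrow> nat) \<Rightarrow> nat set set" where
  "shared_edges ts f = {\<epsilon> \<in> EH. f ` \<epsilon> \<in> tuple_edges ts}"

lemma shared_edge_subset:
  assumes "\<epsilon> \<in> shared_edges ts f"
  shows "\<epsilon> \<subseteq> shared_vertices ts f"
proof -
  have "\<epsilon> \<in> EH" and "f ` \<epsilon> \<subseteq> tuple_vertices ts"
    using assms tuple_edge_subset_vertices unfolding shared_edges_def by auto
  then show ?thesis
    using edge_subset unfolding shared_vertices_def by blast
qed

lemma shared_subgraph: "(shared_vertices ts f, shared_edges ts f) \<in> subgraphs v EH"
  using shared_edge_subset unfolding subgraphs_def shared_vertices_def shared_edges_def by auto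

text \<open>Strict balance forbids cutting \<open>H\<close> into several pieces: their densities would average
  to the density of \<open>H\<close>, while each of them is strictly smaller.\<close>

lemma subgraph_partition_whole:
  assumes "finite G" and sub: "\<And>g. g \<in> G \<Longrightarrow> (W g, D g) \<in> subgraphs v EH"
    and W_disjoint: "disjoint_family_on W G" and W_cover: "(\<Union>g\<in>G. W g) = {0..<v}"
    and D_disjoint: "disjoint_family_on D G" and D_cover: "(\<Union>g\<in>G. D g) = EH"
  shows "\<exists>g\<in>G. W g = {0..<v}"
proof (rule ccontr)
  assume proper: "\<not> ?thesis"
  have finite: "finite (W g)" "finite (D g)" if "g \<in> G" for g
    using finite_subgraph[OF sub[OF that]] by auto
  have card_edges: "real (card EH) = (\<Sum>g\<in>G. real (card (D g)))"
    unfolding D_cover[symmetric] using \<open>finite G\<close> finite D_disjoint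
    by (subst card_UN_disjoint) (auto simp: disjoint_family_on_def)
  have card_vertices: "real v = (\<Sum>g\<in>G. real (card (W g)))"
    using card_UN_disjoint[OF \<open>finite G\<close>, of W] W_cover finite W_disjoint
    by (simp add: disjoint_family_on_def flip: of_nat_sum)
  obtain g0 where "g0 \<in> G" "0 \<in> W g0"
    using W_cover two_le_order by (metis UN_E atLeastLessThan_iff le0 less_le_trans pos2)
  then have "real (card (D g0)) * real v < real (card EH) * real (card (W g0))"
    using subgraph_density_less[OF sub] proper by blast
  then have "(\<Sum>g\<in>G. real (card (D g)) * real v) < (\<Sum>g\<in>G. real (card EH) * real (card (W g)))"
    using \<open>finite G\<close> \<open>g0 \<in> G\<close> subgraph_density_le[OF sub] by (intro sum_strict_mono_ex1) auto
  moreover have "(\<Sum>g\<in>G. real (card (D g)) * real v) = real (card EH) * real v"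
    unfolding card_edges by (simp add: sum_distrib_right)
  moreover have "(\<Sum>g\<in>G. real (card EH) * real (card (W g))) = real (card EH) * real v"
    unfolding card_vertices by (simp add: sum_distrib_left)
  ultimately show False
    by simp
qed

lemma tuple_vertices_single: "tuple_vertices [g] = g ` {0..<v}"
  and tuple_edges_single: "tuple_edges [g] = copy_edges g"
  unfolding tuple_vertices_def tuple_edges_def by simp_all

lemma shared_edges_cover:
  assumes "copy_edges f \<subseteq> tuple_edges ts"
  shows "(\<Union>g\<in>set ts. shared_edges [g] f) = EH"
proof (intro equalityI subsetI)
  fix \<epsilon>
  assume "\<epsilon> \<in> EH"
  then have "f ` \<epsilon> \<in> tuple_edges ts"
    using assms unfolding copy_edges_def by blast
  then obtain g where "g \<in> set ts" "f ` \<epsilon> \<in> copy_edges g"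
    unfolding tuple_edges_def by blast
  then show "\<epsilon> \<in> (\<Union>g\<in>set ts. shared_edges [g] f)"
    using \<open>\<epsilon> \<in> EH\<close> unfolding shared_edges_def tuple_edges_single by blast
qed (auto simp: shared_edges_def)

lemma shared_vertices_cover:
  assumes "copy_edges f \<subseteq> tuple_edges ts"
  shows "(\<Union>g\<in>set ts. shared_vertices [g] f) = {0..<v}"
proof (intro equalityI subsetI)
  fix a
  assume "a \<in> {0..<v}"
  then obtain \<epsilon> where \<epsilon>: "\<epsilon> \<in> EH" "a \<in> \<epsilon>"
    using no_isolated_vertex[of a] by auto
  then obtain g where "g \<in> set ts" "\<epsilon> \<in> shared_edges [g] f"
    using shared_edges_cover[OF assms] by blast
  then show "a \<in> (\<Union>g\<in>set ts. shared_vertices [g] f)"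
    using shared_edge_subset \<epsilon>(2) by blast
qed (auto simp: shared_vertices_def)

lemma vertex_disjoint_shared_disjoint:
  assumes "vertex_disjoint ts"
  shows "disjoint_family_on (\<lambda>g. shared_vertices [g] f) (set ts)"
    and "disjoint_family_on (\<lambda>g. shared_edges [g] f) (set ts)"
proof -
  show vertices: "disjoint_family_on (\<lambda>g. shared_vertices [g] f) (set ts)"
    unfolding disjoint_family_on_def
  proof (intro ballI impI)
    fix g g'
    assume "g \<in> set ts" "g' \<in> set ts" "g \<noteq> g'"
    then have "g ` {0..<v} \<inter> g' ` {0..<v} = {}"
      by (rule vertex_disjoint_pairwise[OF assms])
    then show "shared_vertices [g] f \<inter> shared_vertices [g'] f = {}"
      unfolding shared_vertices_def tuple_vertices_single by blast
  qed
  show "disjoint_family_on (\<lambda>g. shared_edges [g] f) (set ts)"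
    unfolding disjoint_family_on_def
  proof (intro ballI impI)
    fix g g'
    assume "g \<in> set ts" "g' \<in> set ts" "g \<noteq> g'"
    then have disjoint: "shared_vertices [g] f \<inter> shared_vertices [g'] f = {}"
      using vertices unfolding disjoint_family_on_def by simp
    show "shared_edges [g] f \<inter> shared_edges [g'] f = {}"
    proof (rule ccontr)
      assume "shared_edges [g] f \<inter> shared_edges [g'] f \<noteq> {}"
      then obtain \<epsilon> where \<epsilon>: "\<epsilon> \<in> shared_edges [g] f" "\<epsilon> \<in> shared_edges [g'] f"
        by blast
      then have "\<epsilon> \<subseteq> shared_vertices [g] f \<inter> shared_vertices [g'] f"
        using shared_edge_subset by blast
      moreover have "\<epsilon> \<noteq> {}"
        using \<epsilon>(1) edge_nonempty unfolding shared_edges_def by blast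
      ultimately show False
        using disjoint by blast
    qed
  qed
qed

lemma copy_within_disjoint_copies:
  assumes disjoint: "vertex_disjoint ts" and ts_emb: "set ts \<subseteq> embeddings m" and f: "f \<in> embeddings m"
    and within: "copy_edges f \<subseteq> tuple_edges ts"
  shows "copy_edges f \<in> copy_edges ` set ts"
proof -
  obtain g where g: "g \<in> set ts" and whole: "shared_vertices [g] f = {0..<v}"
    using subgraph_partition_whole[OF _ shared_subgraph vertex_disjoint_shared_disjoint(1)[OF disjoint]
        shared_vertices_cover[OF within] vertex_disjoint_shared_disjoint(2)[OF disjoint]
        shared_edges_cover[OF within]] by auto
  have "copy_edges f \<subseteq> copy_edges g"
  proof
    fix x
    assume "x \<in> copy_edges f"
    then obtain \<epsilon> where \<epsilon>: "\<epsilon> \<in> EH" "x = f ` \<epsilon>"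
      unfolding copy_edges_def by auto
    then obtain g' where g': "g' \<in> set ts" "\<epsilon> \<in> shared_edges [g'] f"
      using shared_edges_cover[OF within] by blast
    have "\<epsilon> \<in> shared_edges [g] f"
    proof (rule ccontr)
      assume "\<epsilon> \<notin> shared_edges [g] f"
      then have "g \<noteq> g'"
        using g' by auto
      moreover have "\<epsilon> \<subseteq> shared_vertices [g'] f"
        using shared_edge_subset g'(2) by blast
      ultimately show False
        using vertex_disjoint_shared_disjoint(1)[OF disjoint, of f] g g' whole edge_subset[OF \<epsilon>(1)]
          edge_nonempty[OF \<epsilon>(1)] unfolding disjoint_family_on_def by blast
    qed
    then show "x \<in> copy_edges g"
      using \<epsilon>(2) unfolding shared_edges_def tuple_edges_single by simp
  qed
  moreover have "card (copy_edges f) = card (copy_edges g)"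
    using card_copy_edges f ts_emb g by auto
  ultimately have "copy_edges f = copy_edges g"
    by (simp add: card_subset_eq finite_copy_edges)
  then show ?thesis
    using g by blast
qed

lemma card_new_edges:
  assumes f: "f \<in> embeddings m"
  shows "card (copy_edges f - tuple_edges ts) = card EH - card (shared_edges ts f)"
proof -
  have eq: "copy_edges f - tuple_edges ts = (\<lambda>\<epsilon>. f ` \<epsilon>) ` (EH - shared_edges ts f)"
    unfolding copy_edges_def shared_edges_def by auto
  have "card ((\<lambda>\<epsilon>. f ` \<epsilon>) ` (EH - shared_edges ts f)) = card (EH - shared_edges ts f)"
    by (rule card_image) (rule inj_on_subset[OF inj_on_image_edges[OF f]], auto)
  also have "\<dots> = card EH - card (shared_edges ts f)"
    by (rule card_Diff_subset) (use finite_edges in \<open>auto simp: shared_edges_def intro: finite_subset\<close>)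
  finally show ?thesis unfolding eq .
qed

lemma card_embeddings_sharing:
  assumes W: "W \<subseteq> {0..<v}" and ts: "tuple_vertices ts \<subseteq> {0..<m}"
  shows "card {f \<in> embeddings m. shared_vertices ts f = W} \<le> card (tuple_vertices ts) ^ card W * m ^ (v - card W)"
proof -
  define T where "T = (\<lambda>a. if a \<in> W then tuple_vertices ts else {0..<m})"
  have "{f \<in> embeddings m. shared_vertices ts f = W} \<subseteq> PiE {0..<v} T"
    unfolding embeddings_def shared_vertices_def T_def by (auto simp: PiE_iff extensional_def)
  then have "card {f \<in> embeddings m. shared_vertices ts f = W} \<le> card (PiE {0..<v} T)"
    by (rule card_mono[rotated]) (simp add: finite_PiE T_def finite_tuple_vertices)
  also have "card (PiE {0..<v} T) = (\<Prod>a\<in>{0..<v}. if a \<in> W then card (tuple_vertices ts) else m)"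
    unfolding card_PiE[OF finite_atLeastLessThan] T_def by (intro prod.cong) auto
  also have "\<dots> = card (tuple_vertices ts) ^ card W * m ^ (v - card W)"
    using W by (simp add: prod.If_cases Int_absorb1 Diff_eq[symmetric] card_Diff_subset finite_subset)
  finally show ?thesis .
qed

lemma sum_new_edges_bound:
  assumes F: "F \<subseteq> embeddings m" and Sg: "Sg \<subseteq> subgraphs v EH"
    and inS: "\<And>f. f \<in> F \<Longrightarrow> (shared_vertices ts f, shared_edges ts f) \<in> Sg"
    and p: "p \<ge> 0" and tsI: "set ts \<subseteq> embeddings m"
  shows "(\<Sum>f\<in>F. p ^ card (copy_edges f - tuple_edges ts)) \<le>
         (\<Sum>(W, D)\<in>Sg. real (card (tuple_vertices ts)) ^ card W * real m ^ (v - card W) * p ^ (card EH - card D))"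
proof -
  have finF: "finite F"
    using F finite_embeddings finite_subset by blast
  have finS: "finite Sg"
    using Sg finite_subgraphs finite_subset by blast
  have "(\<Sum>f\<in>F. p ^ card (copy_edges f - tuple_edges ts)) = (\<Sum>f\<in>F. p ^ (card EH - card (snd (shared_vertices ts f, shared_edges ts f))))"
    using F card_new_edges by (intro sum.cong) auto
  also have "\<dots> = (\<Sum>y\<in>Sg. \<Sum>f\<in>{f \<in> F. (shared_vertices ts f, shared_edges ts f) = y}. p ^ (card EH - card (snd (shared_vertices ts f, shared_edges ts f))))"
    by (rule sum.group[symmetric, OF finF finS]) (use inS in auto)
  also have "\<dots> \<le> (\<Sum>y\<in>Sg. real (card (tuple_vertices ts)) ^ card (fst y) * real m ^ (v - card (fst y)) * p ^ (card EH - card (snd y)))"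
  proof (rule sum_mono)
    fix y assume y: "y \<in> Sg"
    obtain W D where yWD: "y = (W, D)"
      by (cases y)
    have WV: "W \<subseteq> {0..<v}"
      using Sg y unfolding yWD subgraphs_def by auto
    have "(\<Sum>f\<in>{f \<in> F. (shared_vertices ts f, shared_edges ts f) = y}. p ^ (card EH - card (snd (shared_vertices ts f, shared_edges ts f)))) =
          real (card {f \<in> F. (shared_vertices ts f, shared_edges ts f) = y}) * p ^ (card EH - card D)"
      unfolding yWD by simp
    also have "\<dots> \<le> real (card {f \<in> embeddings m. shared_vertices ts f = W}) * p ^ (card EH - card D)"
    proof (rule mult_right_mono)
      have "{f \<in> F. (shared_vertices ts f, shared_edges ts f) = y} \<subseteq> {f \<in> embeddings m. shared_vertices ts f = W}"
        using F unfolding yWD by auto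
      then show "real (card {f \<in> F. (shared_vertices ts f, shared_edges ts f) = y}) \<le> real (card {f \<in> embeddings m. shared_vertices ts f = W})"
        by (intro of_nat_mono card_mono) (auto intro: finite_subset[OF _ finite_embeddings])
    qed (use p in simp)
    also have "\<dots> \<le> real (card (tuple_vertices ts) ^ card W * m ^ (v - card W)) * p ^ (card EH - card D)"
      by (intro mult_right_mono of_nat_mono card_embeddings_sharing WV tuple_vertices_subset tsI) (use p in simp)
    finally show "(\<Sum>f\<in>{f \<in> F. (shared_vertices ts f, shared_edges ts f) = y}. p ^ (card EH - card (snd (shared_vertices ts f, shared_edges ts f)))) \<le>
        real (card (tuple_vertices ts)) ^ card (fst y) * real m ^ (v - card (fst y)) * p ^ (card EH - card (snd y))"
      unfolding yWD by simp
  qed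
  finally show ?thesis by (simp add: case_prod_unfold)
qed

text \<open>A copy that shares the subgraph \<open>(W, D)\<close> of \<open>H\<close> with a tuple of \<open>j\<close> copies has at most
  \<open>(j v)\<^bsup>|W|\<^esup> m\<^bsup>v - |W|\<^esup>\<close> embeddings and needs \<open>e - |D|\<close> further edges, each present with
  probability \<open>(c / m)\<^bsup>v / e\<^esup>\<close>; \<open>overlap_exponent W D\<close> is the resulting power of \<open>m\<close>.\<close>

definition overlap_const :: "real \<Rightarrow> nat \<Rightarrow> real" where
  "overlap_const c j = (real (j * v) + 1) ^ v * (1 + c) ^ v"

definition overlap_exponent :: "nat set \<Rightarrow> nat set set \<Rightarrow> real" where
  "overlap_exponent W D = real (card D) * real v / real (card EH) - real (card W)"

lemma overlap_exponent_nonpos: "(W, D) \<in> subgraphs v EH \<Longrightarrow> overlap_exponent W D \<le> 0"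
  unfolding overlap_exponent_def using subgraph_density_le[of W D] card_edges_pos by (simp add: field_simps)

lemma overlap_exponent_neg:
  "(W, D) \<in> subgraphs v EH \<Longrightarrow> W \<noteq> {} \<Longrightarrow> (W, D) \<noteq> ({0..<v}, EH) \<Longrightarrow> overlap_exponent W D < 0"
  unfolding overlap_exponent_def using subgraph_density_less[of W D] card_edges_pos by (simp add: field_simps)

lemma powr_le_one_plus_power:
  fixes c t :: real
  assumes "0 < c" and "0 \<le> t" and "t \<le> real n"
  shows "c powr t \<le> (1 + c) ^ n"
proof -
  have "c powr t \<le> (1 + c) powr t"
    using assms by (intro powr_mono2) auto
  also have "\<dots> \<le> (1 + c) powr real n"
    using assms by (intro powr_mono) auto
  also have "\<dots> = (1 + c) ^ n"
    using assms by (simp add: powr_realpow)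
  finally show ?thesis .
qed

lemma overlap_term_eq:
  assumes WD: "(W, D) \<in> subgraphs v EH" and "m > 0" and "c > 0"
  shows "real m ^ (v - card W) * edge_prob c m ^ (card EH - card D) =
         c powr (real v * real (card EH - card D) / real (card EH)) * real m powr overlap_exponent W D"
proof -
  define t where "t = real v * real (card EH - card D) / real (card EH)"
  have "card W \<le> v" and "card D \<le> card EH"
    using WD finite_edges unfolding subgraphs_def by (auto simp: subset_eq_atLeast0_lessThan_card card_mono)
  then have exponent: "real v - real (card W) - t = overlap_exponent W D"
    unfolding t_def overlap_exponent_def using card_edges_pos by (simp add: of_nat_diff field_simps)
  have "edge_prob c m ^ (card EH - card D) = (c / real m) powr t"
    unfolding edge_prob_def t_def using assms by (subst powr_power) (auto simp: field_simps)
  also have "\<dots> = c powr t / real m powr t"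
    using assms by (simp add: powr_divide)
  finally have "real m ^ (v - card W) * edge_prob c m ^ (card EH - card D) =
      c powr t * (real m powr (real v - real (card W)) / real m powr t)"
    using \<open>card W \<le> v\<close> \<open>m > 0\<close> by (simp add: powr_realpow[symmetric] of_nat_diff)
  then show ?thesis
    unfolding exponent[symmetric] t_def[symmetric] by (simp add: powr_diff)
qed

lemma overlap_term_bound:
  assumes WD: "(W, D) \<in> subgraphs v EH" and "m \<ge> 1" and "c > 0" and "N \<le> j * v"
  shows "real N ^ card W * real m ^ (v - card W) * edge_prob c m ^ (card EH - card D)
         \<le> overlap_const c j * real m powr overlap_exponent W D"
proof -
  have "card W \<le> v"
    using WD unfolding subgraphs_def by (auto simp: subset_eq_atLeast0_lessThan_card)
  have "real N ^ card W \<le> (real (j * v) + 1) ^ card W"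
    using \<open>N \<le> j * v\<close> by (intro power_mono) (simp_all flip: of_nat_mult)
  also have "\<dots> \<le> (real (j * v) + 1) ^ v"
    using \<open>card W \<le> v\<close> by (intro power_increasing) auto
  finally have N: "real N ^ card W \<le> (real (j * v) + 1) ^ v" .
  have "real v * real (card EH - card D) / real (card EH) \<le> real v"
    using card_edges_pos by (simp add: divide_le_eq mult_left_mono)
  then have c: "c powr (real v * real (card EH - card D) / real (card EH)) \<le> (1 + c) ^ v"
    using \<open>c > 0\<close> by (intro powr_le_one_plus_power) auto
  have "real N ^ card W * real m ^ (v - card W) * edge_prob c m ^ (card EH - card D) =
      real N ^ card W * c powr (real v * real (card EH - card D) / real (card EH)) * real m powr overlap_exponent W D"
    using overlap_term_eq[OF WD] assms by (simp add: mult.assoc)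
  also have "\<dots> \<le> overlap_const c j * real m powr overlap_exponent W D"
    unfolding overlap_const_def using N c by (intro mult_right_mono mult_mono) auto
  finally show ?thesis .
qed


lemma card_tuple_vertices_le: "set ts \<subseteq> embeddings m \<Longrightarrow> card (tuple_vertices ts) \<le> length ts * v"
proof (induction ts)
  case Nil
  then show ?case by (simp add: tuple_vertices_Nil)
next
  case (Cons f ts)
  have "card (tuple_vertices (f # ts)) \<le> card (f ` {0..<v}) + card (tuple_vertices ts)"
    unfolding tuple_vertices_Cons by (rule card_Un_le)
  also have "card (f ` {0..<v}) \<le> v"
    using card_image_le[of "{0..<v}" f] by simp
  finally show ?case using Cons by simp
qed

lemma sum_new_edges_le:
  assumes ts_emb: "set ts \<subseteq> embeddings m" and "m \<ge> 1" and "c > 0"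
  shows "(\<Sum>f\<in>embeddings m. edge_prob c m ^ card (copy_edges f - tuple_edges ts))
         \<le> real (card (subgraphs v EH)) * overlap_const c (length ts)"
proof -
  have "(\<Sum>f\<in>embeddings m. edge_prob c m ^ card (copy_edges f - tuple_edges ts)) \<le>
      (\<Sum>(W, D)\<in>subgraphs v EH. real (card (tuple_vertices ts)) ^ card W * real m ^ (v - card W) *
          edge_prob c m ^ (card EH - card D))"
    using shared_subgraph ts_emb by (intro sum_new_edges_bound) auto
  also have "\<dots> \<le> (\<Sum>(W, D)\<in>subgraphs v EH. overlap_const c (length ts))"
  proof (rule sum_mono, clarify)
    fix W D
    assume WD: "(W, D) \<in> subgraphs v EH"
    have "real m powr overlap_exponent W D \<le> 1"
      using powr_mono[of "overlap_exponent W D" 0 "real m"] overlap_exponent_nonpos[OF WD] \<open>m \<ge> 1\<close> by simp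
    moreover have "0 \<le> overlap_const c (length ts)"
      unfolding overlap_const_def using \<open>c > 0\<close> by simp
    ultimately show "real (card (tuple_vertices ts)) ^ card W * real m ^ (v - card W) * edge_prob c m ^ (card EH - card D)
        \<le> overlap_const c (length ts)"
      using overlap_term_bound[OF WD \<open>m \<ge> 1\<close> \<open>c > 0\<close> card_tuple_vertices_le[OF ts_emb]]
      by (meson mult_left_le order_trans)
  qed
  finally show ?thesis
    by (simp add: case_prod_unfold)
qed

definition proper_subgraphs :: "(nat set \<times> nat set set) set" where
  "proper_subgraphs = {(W, D) \<in> subgraphs v EH. W \<noteq> {} \<and> (W, D) \<noteq> ({0..<v}, EH)}"

definition overlap_error :: "real \<Rightarrow> nat \<Rightarrow> nat \<Rightarrow> real" where
  "overlap_error c j m = (\<Sum>(W, D)\<in>proper_subgraphs. overlap_const c j * real m powr overlap_exponent W D)"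

lemma overlap_error_tendsto: "(\<lambda>m. overlap_error c j m) \<longlonglongrightarrow> 0"
proof -
  have "(\<lambda>m. \<Sum>(W, D)\<in>proper_subgraphs. overlap_const c j * real m powr overlap_exponent W D) \<longlonglongrightarrow> (\<Sum>(W, D)\<in>proper_subgraphs. overlap_const c j * 0)"
    unfolding case_prod_unfold
  proof (intro tendsto_sum tendsto_mult tendsto_const)
    fix y assume y: "y \<in> proper_subgraphs"
    then have "overlap_exponent (fst y) (snd y) < 0"
      unfolding proper_subgraphs_def by (cases y) (auto intro: overlap_exponent_neg)
    then show "(\<lambda>m. real m powr overlap_exponent (fst y) (snd y)) \<longlonglongrightarrow> 0"
      by (intro tendsto_neg_powr filterlim_real_sequentially)
  qed
  then show ?thesis unfolding overlap_error_def by simp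
qed

lemma shared_subgraph_proper:
  assumes disjoint: "vertex_disjoint ts" and ts_emb: "set ts \<subseteq> embeddings m" and f: "f \<in> embeddings m"
    and meets: "f ` {0..<v} \<inter> tuple_vertices ts \<noteq> {}" and new: "copy_edges f \<notin> copy_edges ` set ts"
  shows "(shared_vertices ts f, shared_edges ts f) \<in> proper_subgraphs"
proof -
  have "shared_vertices ts f \<noteq> {}"
    using meets unfolding shared_vertices_def by auto
  moreover have "shared_edges ts f \<noteq> EH"
  proof
    assume "shared_edges ts f = EH"
    then have "copy_edges f \<subseteq> tuple_edges ts"
      unfolding shared_edges_def copy_edges_def by blast
    then show False
      using copy_within_disjoint_copies[OF disjoint ts_emb f] new by blast
  qed
  ultimately show ?thesis
    unfolding proper_subgraphs_def using shared_subgraph by auto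
qed

lemma sum_overlapping_new_edges_le:
  assumes disjoint: "vertex_disjoint ts" and ts_emb: "set ts \<subseteq> embeddings m" and "m \<ge> 1" and "c > 0"
  shows "(\<Sum>f\<in>{f \<in> embeddings m. f ` {0..<v} \<inter> tuple_vertices ts \<noteq> {} \<and> copy_edges f \<notin> copy_edges ` set ts}.
            edge_prob c m ^ card (copy_edges f - tuple_edges ts))
         \<le> overlap_error c (length ts) m"
proof -
  have "(\<Sum>f\<in>{f \<in> embeddings m. f ` {0..<v} \<inter> tuple_vertices ts \<noteq> {} \<and> copy_edges f \<notin> copy_edges ` set ts}.
          edge_prob c m ^ card (copy_edges f - tuple_edges ts)) \<le>
      (\<Sum>(W, D)\<in>proper_subgraphs. real (card (tuple_vertices ts)) ^ card W * real m ^ (v - card W) *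
          edge_prob c m ^ (card EH - card D))"
    using shared_subgraph_proper[OF disjoint ts_emb] ts_emb
    by (intro sum_new_edges_bound) (auto simp: proper_subgraphs_def)
  also have "\<dots> \<le> (\<Sum>(W, D)\<in>proper_subgraphs. overlap_const c (length ts) * real m powr overlap_exponent W D)"
    using overlap_term_bound[OF _ \<open>m \<ge> 1\<close> \<open>c > 0\<close> card_tuple_vertices_le[OF ts_emb]]
    unfolding proper_subgraphs_def by (intro sum_mono) auto
  finally show ?thesis
    unfolding overlap_error_def .
qed

lemma card_tuple_edges_Cons: "card (tuple_edges (f # ts)) = card (tuple_edges ts) + card (copy_edges f - tuple_edges ts)"
proof -
  have "tuple_edges (f # ts) = tuple_edges ts \<union> (copy_edges f - tuple_edges ts)"
    unfolding tuple_edges_Cons by auto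
  moreover have "card (tuple_edges ts \<union> (copy_edges f - tuple_edges ts)) = card (tuple_edges ts) + card (copy_edges f - tuple_edges ts)"
    by (rule card_Un_disjoint) (auto simp: finite_tuple_edges finite_copy_edges)
  ultimately show ?thesis by simp
qed

lemma sum_extensions_nondisjoint_le:
  fixes p :: real
  assumes "p \<ge> 0" and "\<not> vertex_disjoint ts"
  shows "(\<Sum>f\<in>{f \<in> embeddings m. copy_edges f \<notin> copy_edges ` set ts}.
            if vertex_disjoint (f # ts) then 0 else p ^ card (tuple_edges (f # ts)))
         \<le> p ^ card (tuple_edges ts) * (\<Sum>f\<in>embeddings m. p ^ card (copy_edges f - tuple_edges ts))"
proof -
  have "(\<Sum>f\<in>{f \<in> embeddings m. copy_edges f \<notin> copy_edges ` set ts}.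
          if vertex_disjoint (f # ts) then 0 else p ^ card (tuple_edges (f # ts))) =
      (\<Sum>f\<in>{f \<in> embeddings m. copy_edges f \<notin> copy_edges ` set ts}.
          p ^ card (tuple_edges ts) * p ^ card (copy_edges f - tuple_edges ts))"
    using assms(2) by (intro sum.cong) (simp_all add: card_tuple_edges_Cons power_add)
  also have "\<dots> \<le> (\<Sum>f\<in>embeddings m. p ^ card (tuple_edges ts) * p ^ card (copy_edges f - tuple_edges ts))"
    using finite_embeddings \<open>p \<ge> 0\<close> by (intro sum_mono2) auto
  finally show ?thesis
    by (simp add: sum_distrib_left)
qed

lemma sum_extensions_disjoint_eq:
  fixes p :: real
  assumes "vertex_disjoint ts"
  shows "(\<Sum>f\<in>{f \<in> embeddings m. copy_edges f \<notin> copy_edges ` set ts}.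
            if vertex_disjoint (f # ts) then 0 else p ^ card (tuple_edges (f # ts)))
         = p ^ card (tuple_edges ts) *
           (\<Sum>f\<in>{f \<in> embeddings m. f ` {0..<v} \<inter> tuple_vertices ts \<noteq> {} \<and> copy_edges f \<notin> copy_edges ` set ts}.
              p ^ card (copy_edges f - tuple_edges ts))"
proof -
  have "(\<Sum>f\<in>{f \<in> embeddings m. copy_edges f \<notin> copy_edges ` set ts}.
          if vertex_disjoint (f # ts) then 0 else p ^ card (tuple_edges (f # ts))) =
      (\<Sum>f\<in>{f \<in> embeddings m. f ` {0..<v} \<inter> tuple_vertices ts \<noteq> {} \<and> copy_edges f \<notin> copy_edges ` set ts}.
          p ^ card (tuple_edges ts) * p ^ card (copy_edges f - tuple_edges ts))"
    using finite_embeddings assms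
    by (intro sum.mono_neutral_cong_right) (auto simp: card_tuple_edges_Cons power_add)
  then show ?thesis
    by (simp add: sum_distrib_left)
qed

lemma overlap_weight_Suc:
  assumes "p \<ge> 0"
    and all: "\<And>ts. ts \<in> copy_tuples m j \<Longrightarrow> (\<Sum>f\<in>embeddings m. p ^ card (copy_edges f - tuple_edges ts)) \<le> C"
    and meeting: "\<And>ts. ts \<in> copy_tuples m j \<Longrightarrow> vertex_disjoint ts \<Longrightarrow>
        (\<Sum>f\<in>{f \<in> embeddings m. f ` {0..<v} \<inter> tuple_vertices ts \<noteq> {} \<and> copy_edges f \<notin> copy_edges ` set ts}.
           p ^ card (copy_edges f - tuple_edges ts)) \<le> R"
  shows "overlap_weight m p (Suc j) \<le> overlap_weight m p j * C + disjoint_weight m p j * R"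
proof -
  have "overlap_weight m p (Suc j) = (\<Sum>ts\<in>copy_tuples m j. \<Sum>f\<in>{f \<in> embeddings m. copy_edges f \<notin> copy_edges ` set ts}.
            if vertex_disjoint (f # ts) then 0 else p ^ card (tuple_edges (f # ts)))"
    unfolding overlap_weight_def by (rule sum_copy_tuples_Suc)
  also have "\<dots> \<le> (\<Sum>ts\<in>copy_tuples m j. (if vertex_disjoint ts then 0 else p ^ card (tuple_edges ts)) * C +
      (if vertex_disjoint ts then p ^ card (tuple_edges ts) else 0) * R)"
  proof (rule sum_mono)
    fix ts
    assume ts: "ts \<in> copy_tuples m j"
    show "(\<Sum>f\<in>{f \<in> embeddings m. copy_edges f \<notin> copy_edges ` set ts}.
            if vertex_disjoint (f # ts) then 0 else p ^ card (tuple_edges (f # ts)))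
        \<le> (if vertex_disjoint ts then 0 else p ^ card (tuple_edges ts)) * C +
          (if vertex_disjoint ts then p ^ card (tuple_edges ts) else 0) * R"
      using sum_extensions_nondisjoint_le[OF \<open>p \<ge> 0\<close>, where ts = ts and m = m]
        sum_extensions_disjoint_eq[where ts = ts and m = m and p = p]
        mult_left_mono[OF all[OF ts], of "p ^ card (tuple_edges ts)"]
        mult_left_mono[OF meeting[OF ts], of "p ^ card (tuple_edges ts)"] \<open>p \<ge> 0\<close>
      by (cases "vertex_disjoint ts") (auto simp: mult.commute)
  qed
  also have "\<dots> = overlap_weight m p j * C + disjoint_weight m p j * R"
    unfolding overlap_weight_def disjoint_weight_def by (simp add: sum.distrib sum_distrib_right)
  finally show ?thesis .
qed

lemma overlap_weight_0: "overlap_weight m p 0 = 0"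
proof -
  have "copy_tuples m 0 = {[]}"
    unfolding copy_tuples_def by auto
  then show ?thesis unfolding overlap_weight_def by simp
qed

lemma overlap_weight_nonneg: "p \<ge> 0 \<Longrightarrow> overlap_weight m p j \<ge> 0"
  unfolding overlap_weight_def by (intro sum_nonneg) auto

lemma overlap_weight_tendsto:
  assumes c: "c > 0"
  shows "(\<lambda>m. overlap_weight m (edge_prob c m) j) \<longlonglongrightarrow> 0"
proof (induction j)
  case 0
  then show ?case by (simp add: overlap_weight_0)
next
  case (Suc j)
  define C where "C = real (card (subgraphs v EH)) * overlap_const c j"
  have up: "eventually (\<lambda>m. overlap_weight m (edge_prob c m) (Suc j) \<le> overlap_weight m (edge_prob c m) j * C + disjoint_weight m (edge_prob c m) j * overlap_error c j m) sequentially"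
    using eventually_ge_at_top[of 1]
  proof eventually_elim
    case (elim m)
    show ?case
    proof (rule overlap_weight_Suc)
      show "edge_prob c m \<ge> 0"
        by simp
      show "(\<Sum>f\<in>embeddings m. edge_prob c m ^ card (copy_edges f - tuple_edges ts)) \<le> C" if "ts \<in> copy_tuples m j" for ts
        using sum_new_edges_le[of ts m c] that elim c unfolding C_def copy_tuples_def by auto
      show "(\<Sum>f\<in>{f \<in> embeddings m. f ` {0..<v} \<inter> tuple_vertices ts \<noteq> {} \<and> copy_edges f \<notin> copy_edges ` set ts}.
          edge_prob c m ^ card (copy_edges f - tuple_edges ts)) \<le> overlap_error c j m"
        if "ts \<in> copy_tuples m j" "vertex_disjoint ts" for ts
        using sum_overlapping_new_edges_le[of ts m c] that elim c unfolding copy_tuples_def by auto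
    qed
  qed
  have lo: "eventually (\<lambda>m. 0 \<le> overlap_weight m (edge_prob c m) (Suc j)) sequentially"
    by (intro always_eventually allI overlap_weight_nonneg) simp
  have "(\<lambda>m. overlap_weight m (edge_prob c m) j * C + disjoint_weight m (edge_prob c m) j * overlap_error c j m) \<longlonglongrightarrow> 0 * C + c ^ (v * j) * 0"
    by (intro tendsto_add tendsto_mult Suc tendsto_const disjoint_weight_tendsto c overlap_error_tendsto)
  then have "(\<lambda>m. overlap_weight m (edge_prob c m) j * C + disjoint_weight m (edge_prob c m) j * overlap_error c j m) \<longlonglongrightarrow> 0"
    by simp
  then show ?case
    using tendsto_sandwich[OF lo up tendsto_const] by simp
qed

lemma sum_copy_tuples_tendsto:
  assumes c: "c > 0"
  shows "(\<lambda>m. \<Sum>ts\<in>copy_tuples m j. (edge_prob c m) ^ card (tuple_edges ts)) \<longlonglongrightarrow> c ^ (v * j)"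
  unfolding sum_copy_tuples_split using tendsto_add[OF disjoint_weight_tendsto[OF c, of j] overlap_weight_tendsto[OF c, of j]] by simp

lemma binomial_moments_copies_tendsto:
  assumes c: "c > 0" and mlim: "filterlim mm at_top sequentially"
  shows "(\<lambda>n. measure_pmf.expectation (gnp (mm n) (edge_prob c (mm n)))
            (\<lambda>G. real (card (copies_in (mm n) G) choose j)))
         \<longlonglongrightarrow> (c ^ v / real (card (Aut v EH))) ^ j / fact j"
proof -
  define a where "a = real (card (Aut v EH))"
  have a: "a > 0"
    unfolding a_def using card_Aut_pos by simp
  define S where "S = (\<lambda>m. \<Sum>ts\<in>copy_tuples m j. (edge_prob c m) ^ card (tuple_edges ts))"
  have Slim: "(\<lambda>n. S (mm n)) \<longlonglongrightarrow> c ^ (v * j)"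
    unfolding S_def using filterlim_compose[OF sum_copy_tuples_tendsto[OF c, of j] mlim] by (simp add: o_def)
  have ev: "eventually (\<lambda>n. measure_pmf.expectation (gnp (mm n) (edge_prob c (mm n)))
            (\<lambda>G. real (card (copies_in (mm n) G) choose j)) = S (mm n) / (a ^ j * fact j)) sequentially"
  proof -
    have "eventually (\<lambda>n. mm n \<ge> nat \<lceil>c\<rceil> + 1) sequentially"
      using mlim by (simp add: filterlim_at_top)
    then show ?thesis
    proof eventually_elim
      case (elim n)
      have mpos: "real (mm n) > 0"
        using elim by simp
      have cm: "c / real (mm n) \<le> 1"
        using elim mpos c by (simp add: field_simps) linarith
      have p0: "0 \<le> edge_prob c (mm n)"
        by simp
      have p1: "edge_prob c (mm n) \<le> 1"
        unfolding edge_prob_def by (rule powr_le1) (use cm c mpos in auto)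
      show ?case using expectation_choose_copies[OF p0 p1, of "mm n" j] unfolding S_def a_def by simp
    qed
  qed
  have "(\<lambda>n. S (mm n) / (a ^ j * fact j)) \<longlonglongrightarrow> c ^ (v * j) / (a ^ j * fact j)"
    by (intro tendsto_divide Slim tendsto_const) (use a in simp)
  moreover have "c ^ (v * j) / (a ^ j * fact j) = (c ^ v / a) ^ j / fact j"
    by (simp add: power_mult power_divide)
  ultimately show ?thesis using tendsto_cong[OF ev] unfolding a_def by simp
qed

end

theorem mainTheorem4:
  fixes vH :: nat and EH :: "nat set set" and c h0 :: real and m :: "nat \<Rightarrow> nat"
  assumes H_graph: "is_graph vH EH"
    and H_edge: "EH \<noteq> {}"
    and H_sb: "strictly_balanced vH EH"
    and c_pos: "c > 0" and h0_pos: "h0 > 0"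
    and mu_ge: "c ^ vH / real (card (Aut vH EH)) \<ge> h0"
    and m_lim: "filterlim m at_top sequentially"
  shows "\<forall>\<epsilon>>0. (\<lambda>n. measure_pmf.prob
            (Pi_pmf {..<n} {} (\<lambda>_. gnp (m n) ((c / real (m n)) powr (1 / max_density vH EH))))
            {\<omega>. let F = (\<lambda>l. \<Sum>i<n. (copies vH EH (m n) (\<omega> i) - h0)
                                  * exp (- l * (copies vH EH (m n) (\<omega> i) - h0)))
                in (\<exists>!l. F l = 0) \<and>
                   \<bar>(THE l. F l = 0) - ln ((c ^ vH / real (card (Aut vH EH))) / h0)\<bar> < \<epsilon>})
          \<longlonglongrightarrow> 1"
proof -
  interpret strictly_balanced_graph vH EH
    using H_graph H_edge H_sb by unfold_locales
  define Q where "Q = (\<lambda>n. gnp (m n) (edge_prob c (m n)))"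
  define X where "X = (\<lambda>n G. card (copies_in (m n) G))"
  define \<mu> where "\<mu> = c ^ vH / real (card (Aut vH EH))"
  have "\<mu> > 0"
    using c_pos card_Aut_pos by (simp add: \<mu>_def)
  have law: "(\<lambda>n. pmf (map_pmf (X n) (Q n)) k) \<longlonglongrightarrow> pmf (poisson_pmf \<mu>) k" for k
    using \<open>\<mu> > 0\<close> finite_set_pmf_gnp binomial_moments_copies_tendsto[OF c_pos m_lim]
    unfolding Q_def X_def \<mu>_def by (intro pmf_tendsto_poisson_of_binomial_moments) simp_all
  have "whp (\<lambda>n. Pi_pmf {..<n} {} (\<lambda>_. Q n))
      (\<lambda>n \<omega>. let F = (\<lambda>l. \<Sum>i<n. score h0 l (real (X n (\<omega> i))))
             in (\<exists>!l. F l = 0) \<and> \<bar>(THE l. F l = 0) - ln (\<mu> / h0)\<bar> < \<epsilon>)" if "\<epsilon> > 0" for \<epsilon>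
    using h0_pos mu_ge[folded \<mu>_def] that law by (rule whp_estimator_close)
  then show ?thesis
    unfolding whp_def score_def Q_def X_def \<mu>_def edge_prob_def max_density_eq copies_eq_card by simp
qed

end
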